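(* Consider the noiseless model and assume (F'). For $\ell<0$, $\mathcal V_n(\ell)$ is the law of $$\sum_{k=0}^{N_0(n)}\Big(2\sum_{j=k}^{N_0(n)}\lambda_j(n)E_j\Big)^{1/2}\mathbf 1_{\{Z=k\}},$$ where $E_0,\dots,E_{N_0(n)}$ are i.i.d. mean-one exponential random variables, and $Z$ is an independent random variable with $P(Z=j)=p_j(n,\ell)$ for $j\in\{0,\dots,N_0(n)\}$.
   Context: **Discrete processes with memory.** Fix $n\ge2$ and let $\mathcal D_n=\{0,\dots,n\}$, with reals $v_j(n)$ and rate functions $a_{ij}:\mathbb R\to[0,\infty)$. The process $(X_n,L_n)$ on $\mathcal D_n\times\mathbb R$ is built as follows. - Set $T_0=0$. - If $X_n(T_k)=x$ and $L_n(T_k)=y$, let $T^j_{k+1}=\inf\{t>T_k:\int_{T_k}^ta_{xj}(y+v_x(n)(s-T_k))ds\ge E^j_k\}$, where the $E^j_k$ are i.i.d. mean-one exponentials independent of the initial state. Let $T_{k+1}=\min_jT^j_{k+1}$. - On $[T_k,T_{k+1})$, $X_n=x$ and $L_n(s)=y+v_x(n)(s-T_k)$; then $X_n(T_{k+1})$ is the minimizing $j$. **Noiseless model.** There are integers $0\le N_0(n),N_1(n)<n/2$ with $N_k(n)/n\to0$. - Boundary layers: $\partial\mathcal D_n^-=\{0,\dots,N_0(n)\}$ and $\partial\mathcal D_n^+=\{n-N_1(n),\dots,n\}$. - Memory rates: $v_j(n)>0$ on $\partial\mathcal D_n^-$, $<0$ on $\partial\mathcal D_n^+$, and $0$ elsewhere,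 with $\sum_{j=0}^{N_0(n)}v_j(n)=\sum_{j=0}^{N_1(n)}|v_{n-j}(n)|=n$. - Jump rates: $a_{ij}\equiv0$ for $|i-j|\ne1$, and $a_{i,i+1}(\ell)=c_i(n)\max(\ell,0)$, $a_{i+1,i}(\ell)=c_i(n)\max(-\ell,0)$ for $0\le i\le n-1$, where - $c_i(n)=\sum_{m=0}^iv_m(n)$ for $i\le N_0(n)$, - $c_i(n)=n$ for $N_0(n)\le i\le n-N_1(n)-1$, - $c_{n-1-i}(n)=\sum_{m=0}^i|v_{n-m}(n)|$ for $0\le i\le N_1(n)$. - Ratios: $\lambda_i(n)=v_i(n)/c_i(n)$ for $0\le i\le N_0(n)$, and $\mu_i(n)=v_{i+1}(n)/c_i(n)$ for $0\le i<N_0(n)$. - Condition (F'): $v_j(n)\ge v_{j+1}(n)>0$ for $0\le j\le N_0(n)-1$. **Reversal and exit quantities.** Start from $X_n(0)=N_0(n)$, $L_n(0)=\ell<0$. Let $\mathcal T_n=\inf\{t\ge0:L_n(t)\ge0\}$, $G_n=X_n(\mathcal T_n)$, $\mathcal U_n=\inf\{t\ge\mathcal T_n:X_n(t)\notin\partial\mathcal D_n^-\}$, and $p_j(n,\ell)=P(G_n=j)$. Let $\mathcal V_n(\ell)$ be the law of $L_n(\mathcal U_n)$. *)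

theory Defs
  imports "HOL-Probability.Probability"
begin

text \<open>Clock for a single target: given the rate function r = a_{xj}, the current memory y,
  the memory rate w = v_x and the exponential variable e, this is
  inf {t > 0. integral_0^t r(y + w s) ds >= e} (relative to the current jump time),
  and infinity if the set is empty.\<close>
definition clock :: "(real \<Rightarrow> real) \<Rightarrow> real \<Rightarrow> real \<Rightarrow> real \<Rightarrow> ereal" where
  "clock r y w e =
     (if {t::real. 0 < t \<and> e \<le> integral {0..t} (\<lambda>s. r (y + w * s))} = {} then \<infinity>
      else ereal (Inf {t::real. 0 < t \<and> e \<le> integral {0..t} (\<lambda>s. r (y + w * s))}))"

definition hold :: "nat \<Rightarrow> (nat \<Rightarrow> nat \<Rightarrow> real \<Rightarrow> real) \<Rightarrow> (nat \<Rightarrow> real)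
    \<Rightarrow> nat \<Rightarrow> real \<Rightarrow> (nat \<Rightarrow> real) \<Rightarrow> ereal" where
  "hold n a v x y e = Min ((\<lambda>j. clock (a x j) y (v x) (e j)) ` {0..n})"

text \<open>The minimizing target (ties, a null event, are broken by taking the smallest index).\<close>
definition target :: "nat \<Rightarrow> (nat \<Rightarrow> nat \<Rightarrow> real \<Rightarrow> real) \<Rightarrow> (nat \<Rightarrow> real)
    \<Rightarrow> nat \<Rightarrow> real \<Rightarrow> (nat \<Rightarrow> real) \<Rightarrow> nat" where
  "target n a v x y e = (LEAST j. j \<le> n \<and> clock (a x j) y (v x) (e j) = hold n a v x y e)"

text \<open>Embedded jump chain: k-th entry is (T_k, X(T_k), L(T_k)).  E k j = E^j_k.
  Once a holding time is infinite, the chain stays put with T = infinity.\<close>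
fun jchain :: "nat \<Rightarrow> (nat \<Rightarrow> nat \<Rightarrow> real \<Rightarrow> real) \<Rightarrow> (nat \<Rightarrow> real) \<Rightarrow> nat \<Rightarrow> real
    \<Rightarrow> (nat \<Rightarrow> nat \<Rightarrow> real) \<Rightarrow> nat \<Rightarrow> ereal \<times> nat \<times> real" where
  "jchain n a v x0 y0 E 0 = (0, x0, y0)"
| "jchain n a v x0 y0 E (Suc k) =
     (case jchain n a v x0 y0 E k of (T, x, y) \<Rightarrow>
        (let \<tau> = hold n a v x y (E k) in
         if T = \<infinity> \<or> \<tau> = \<infinity> then (\<infinity>, x, y)
         else (T + \<tau>, target n a v x y (E k), y + v x * real_of_ereal \<tau>)))"

text \<open>Continuous-time path (X(t), L(t)) for t >= 0: on [T_k, T_{k+1}) the position is X(T_k)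
  and the memory is L(T_k) + v_{X(T_k)} (t - T_k).\<close>
definition path :: "nat \<Rightarrow> (nat \<Rightarrow> nat \<Rightarrow> real \<Rightarrow> real) \<Rightarrow> (nat \<Rightarrow> real) \<Rightarrow> nat \<Rightarrow> real
    \<Rightarrow> (nat \<Rightarrow> nat \<Rightarrow> real) \<Rightarrow> real \<Rightarrow> nat \<times> real" where
  "path n a v x0 y0 E t =
     (let k = (LEAST k. ereal t < fst (jchain n a v x0 y0 E (Suc k)));
          (T, x, y) = jchain n a v x0 y0 E k
      in (x, y + v x * (t - real_of_ereal T)))"

definition revT :: "nat \<Rightarrow> (nat \<Rightarrow> nat \<Rightarrow> real \<Rightarrow> real) \<Rightarrow> (nat \<Rightarrow> real) \<Rightarrow> nat \<Rightarrow> real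
    \<Rightarrow> (nat \<Rightarrow> nat \<Rightarrow> real) \<Rightarrow> real" where
  "revT n a v x0 y0 E = Inf {t. 0 \<le> t \<and> 0 \<le> snd (path n a v x0 y0 E t)}"

definition exitT :: "nat \<Rightarrow> (nat \<Rightarrow> nat \<Rightarrow> real \<Rightarrow> real) \<Rightarrow> (nat \<Rightarrow> real) \<Rightarrow> nat \<Rightarrow> real
    \<Rightarrow> nat set \<Rightarrow> (nat \<Rightarrow> nat \<Rightarrow> real) \<Rightarrow> real" where
  "exitT n a v x0 y0 B E =
     Inf {t. revT n a v x0 y0 E \<le> t \<and> fst (path n a v x0 y0 E t) \<notin> B}"

definition cc :: "nat \<Rightarrow> nat \<Rightarrow> nat \<Rightarrow> (nat \<Rightarrow> real) \<Rightarrow> nat \<Rightarrow> real" where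
  "cc n N0 N1 v i =
     (if i \<le> N0 then (\<Sum>m\<le>i. v m)
      else if i \<le> n - N1 - 1 then real n
      else (\<Sum>m\<le>n - 1 - i. \<bar>v (n - m)\<bar>))"

definition nl_rate :: "nat \<Rightarrow> nat \<Rightarrow> nat \<Rightarrow> (nat \<Rightarrow> real) \<Rightarrow> nat \<Rightarrow> nat \<Rightarrow> real \<Rightarrow> real" where
  "nl_rate n N0 N1 v i j l =
     (if j = Suc i \<and> i < n then cc n N0 N1 v i * max l 0
      else if i = Suc j \<and> j < n then cc n N0 N1 v j * max (- l) 0
      else 0)"

definition lam :: "nat \<Rightarrow> nat \<Rightarrow> nat \<Rightarrow> (nat \<Rightarrow> real) \<Rightarrow> nat \<Rightarrow> real" where
  "lam n N0 N1 v i = v i / cc n N0 N1 v i"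

end

theory Submission
  imports Defs
begin

text \<open>Started at site \<open>N0\<close> with memory \<open>l < 0\<close>, the walk can only step down while the
  memory \<open>L\<close> is negative, and \<open>L\<close> rises at rate \<open>v x\<close>. The clock of the step
  \<open>x \<rightarrow> x - 1\<close> integrates \<open>c (x-1) (-L)\<close>, so it rings before \<open>L\<close> reaches \<open>0\<close> iff its
  exponential variable \<open>E\<close> is at most \<open>c (x-1) L\<^sup>2 / (2 v x)\<close>, and then \<open>L\<^sup>2\<close> drops by
  \<open>2 v x E / c (x-1)\<close>. Hence the walk makes a random number \<open>D\<close> of down steps and reverses
  at \<open>G = N0 - D\<close> with memory \<open>0\<close>. From then on it climbs, each step out of a site \<open>j\<close>
  raising \<open>L\<^sup>2\<close> by \<open>2 \<lambda> j E\<close>, so it leaves \<open>{0..N0}\<close> with memory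
  \<open>sqrt (2 * (\<Sum>j\<in>{G..N0}. \<lambda> j * E j))\<close>. The exponential variables read by the descent
  and by the climb are disjoint, so given \<open>D = d\<close> the exit memory has the law of this square
  root at fresh independent exponentials.\<close>


section \<open>Clocks driven by linear rates\<close>

lemma has_real_derivative_max0_power2:
  "((\<lambda>u::real. (max u 0)^2) has_real_derivative 2 * max u 0) (at u)"
proof (cases "u = 0")
  case True
  have "((\<lambda>h::real. ((max (u+h) 0)^2 - (max u 0)^2) / h) \<longlongrightarrow> 2 * max u 0) (at 0)"
  proof -
    have e: "((max (u+h) 0)^2 - (max u 0)^2) / h = max h 0" for h
      using True by (cases "h > 0") (auto simp: power2_eq_square)
    show ?thesis unfolding e using True
      by (auto intro!: tendsto_eq_intros)
  qed
  then show ?thesis by (simp add: DERIV_def)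
next
  case False
  show ?thesis
  proof (cases "u > 0")
    case True
    have "((\<lambda>u::real. u^2) has_real_derivative 2 * u) (at u)"
      by (auto intro!: derivative_eq_intros)
    then have "((\<lambda>u::real. (max u 0)^2) has_real_derivative 2 * u) (at u)"
      by (rule has_field_derivative_transform_within_open[of _ _ _ "{0<..}"]) (use True in auto)
    then show ?thesis using True by simp
  next
    case False
    with \<open>u \<noteq> 0\<close> have "u < 0" by auto
    have "((\<lambda>u::real. 0) has_real_derivative 0) (at u)" by simp
    then have "((\<lambda>u::real. (max u 0)^2) has_real_derivative 0) (at u)"
      by (rule has_field_derivative_transform_within_open[of _ _ _ "{..<0}"]) (use \<open>u < 0\<close> in auto)
    then show ?thesis using \<open>u < 0\<close> by simp
  qed
qed

definition ramp_integral :: "real \<Rightarrow> real \<Rightarrow> real \<Rightarrow> real \<Rightarrow> real" where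
  "ramp_integral \<beta> y w t = (if w = 0 \<or> \<beta> = 0 then t * max (\<beta>*y) 0
     else ((max (\<beta>*(y+w*t)) 0)^2 - (max (\<beta>*y) 0)^2) / (2*\<beta>*w))"

lemma ramp_integral_has_integral:
  assumes "0 \<le> t"
  shows "((\<lambda>r. max (\<beta>*(y+w*r)) 0) has_integral ramp_integral \<beta> y w t) {0..t}"
proof (cases "w = 0 \<or> \<beta> = 0")
  case True
  then have "(\<lambda>r. max (\<beta>*(y+w*r)) 0) = (\<lambda>r. max (\<beta>*y) 0)" by auto
  then show ?thesis using True assms has_integral_const_real[of "max (\<beta>*y) 0" 0 t]
    by (auto simp: ramp_integral_def mult.commute)
next
  case False
  define H where "H z = (max (\<beta>*(y+w*z)) 0)^2 / (2*\<beta>*w)" for z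
  have "(H has_vector_derivative max (\<beta>*(y+w*z)) 0) (at z within {0..t})" for z
  proof -
    have "((\<lambda>z. \<beta>*(y+w*z)) has_real_derivative \<beta>*w) (at z)"
      by (auto intro!: derivative_eq_intros)
    from DERIV_chain2[OF has_real_derivative_max0_power2 this]
    have "(H has_real_derivative (2 * max (\<beta>*(y+w*z)) 0 * (\<beta>*w)) / (2*\<beta>*w)) (at z)"
      unfolding H_def by (intro DERIV_cdivide) (simp add: mult.commute)
    moreover have "(2 * max (\<beta>*(y+w*z)) 0 * (\<beta>*w)) / (2*\<beta>*w) = max (\<beta>*(y+w*z)) 0"
      using False by (simp add: field_simps)
    ultimately show ?thesis
      by (metis has_real_derivative_iff_has_vector_derivative has_vector_derivative_at_within)
  qed
  then have "((\<lambda>r. max (\<beta>*(y+w*r)) 0) has_integral H t - H 0) {0..t}"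
    by (intro fundamental_theorem_of_calculus[OF assms]) auto
  moreover have "H t - H 0 = ramp_integral \<beta> y w t"
    using False by (simp add: H_def ramp_integral_def diff_divide_distrib)
  ultimately show ?thesis by simp
qed

lemma integral_ramp:
  "0 \<le> t \<Longrightarrow> integral {0..t} (\<lambda>r. max (\<beta>*(y+w*r)) 0) = ramp_integral \<beta> y w t"
  using ramp_integral_has_integral integral_unique by blast

lemma ramp_integral_0 [simp]: "ramp_integral \<beta> y w 0 = 0"
  by (simp add: ramp_integral_def)

lemma continuous_on_ramp_integral: "continuous_on UNIV (ramp_integral \<beta> y w)"
  unfolding ramp_integral_def by (cases "w = 0 \<or> \<beta> = 0") (auto intro!: continuous_intros)

lemma ramp_integral_mono:
  assumes "0 \<le> s" "s \<le> t"
  shows "ramp_integral \<beta> y w s \<le> ramp_integral \<beta> y w t"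
proof -
  have "ramp_integral \<beta> y w s = integral {0..s} (\<lambda>r. max (\<beta>*(y+w*r)) 0)"
    using assms by (simp add: integral_ramp)
  also have "\<dots> \<le> integral {0..t} (\<lambda>r. max (\<beta>*(y+w*r)) 0)"
    using assms
    by (intro integral_subset_le) (auto intro!: integrable_continuous_interval continuous_intros)
  also have "\<dots> = ramp_integral \<beta> y w t" using assms by (simp add: integral_ramp)
  finally show ?thesis .
qed

lemma ramp_integral_pos_rate:
  assumes "0 < w" "0 < c"
  shows "ramp_integral c y w t = c * ((max (y+w*t) 0)^2 - (max y 0)^2) / (2*w)"
proof -
  have "max (c*(y+w*t)) 0 = c * max (y+w*t) 0" "max (c*y) 0 = c * max y 0"
    using assms by (simp_all add: max_mult_distrib_left)
  then show ?thesis using assms by (simp add: ramp_integral_def power2_eq_square field_simps)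
qed

lemma ramp_integral_neg_rate:
  assumes "0 < w" "0 < c"
  shows "ramp_integral (-c) y w t = c * ((max (-y) 0)^2 - (max (-(y+w*t)) 0)^2) / (2*w)"
proof -
  have "-c*(y+w*t) = c*(-(y+w*t))" "-c*y = c*(-y)" by (simp_all add: algebra_simps)
  then have "max (-c*(y+w*t)) 0 = c * max (-(y+w*t)) 0" "max (-c*y) 0 = c * max (-y) 0"
    using assms by (simp_all add: max_mult_distrib_left)
  then show ?thesis using assms by (simp add: ramp_integral_def power2_eq_square field_simps)
qed

definition hit_set :: "real \<Rightarrow> real \<Rightarrow> real \<Rightarrow> real \<Rightarrow> real set" where
  "hit_set \<beta> y w e = {t. 0 < t \<and> e \<le> ramp_integral \<beta> y w t}"

lemma hit_set_upward_closed: "t \<in> hit_set \<beta> y w e \<Longrightarrow> t \<le> t' \<Longrightarrow> t' \<in> hit_set \<beta> y w e"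
  unfolding hit_set_def using ramp_integral_mono[of t t' \<beta> y w] by auto

lemma clock_ramp:
  "clock (\<lambda>l. max (\<beta>*l) 0) y w e =
     (if hit_set \<beta> y w e = {} then \<infinity> else ereal (Inf (hit_set \<beta> y w e)))"
proof -
  have "{t. 0 < t \<and> e \<le> integral {0..t} (\<lambda>r. max (\<beta>*(y + w * r)) 0)} = hit_set \<beta> y w e"
    unfolding hit_set_def using integral_ramp by auto
  then show ?thesis unfolding clock_def by simp
qed

lemma clock_ramp_eqI:
  assumes "0 < t0" "e \<le> ramp_integral \<beta> y w t0"
    and "\<And>t. 0 < t \<Longrightarrow> t < t0 \<Longrightarrow> ramp_integral \<beta> y w t < e"
  shows "clock (\<lambda>l. max (\<beta>*l) 0) y w e = ereal t0"
proof -
  have t0: "t0 \<in> hit_set \<beta> y w e" using assms by (simp add: hit_set_def)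
  have "Inf (hit_set \<beta> y w e) = t0"
    by (rule cInf_eq_minimum[OF t0]) (use assms in \<open>force simp: hit_set_def\<close>)
  then show ?thesis using t0 clock_ramp by auto
qed

lemma clock_ramp_eq_infinity:
  assumes "\<And>t. 0 < t \<Longrightarrow> ramp_integral \<beta> y w t < e"
  shows "clock (\<lambda>l. max (\<beta>*l) 0) y w e = \<infinity>"
proof -
  have "hit_set \<beta> y w e = {}" using assms by (force simp: hit_set_def)
  then show ?thesis by (simp add: clock_ramp)
qed

lemma clock_ramp_nonneg: "0 \<le> clock (\<lambda>l. max (\<beta>*l) 0) y w e"
proof -
  have "0 \<le> Inf (hit_set \<beta> y w e)" if "hit_set \<beta> y w e \<noteq> {}"
    by (rule cInf_greatest[OF that]) (auto simp: hit_set_def)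
  then show ?thesis by (simp add: clock_ramp)
qed

lemma clock_ramp_pos:
  assumes "0 < e"
  shows "0 < clock (\<lambda>l. max (\<beta>*l) 0) y w e"
proof -
  have "isCont (ramp_integral \<beta> y w) 0"
    using continuous_on_ramp_integral continuous_on_eq_continuous_at by blast
  then have "\<forall>\<^sub>F t in at 0. dist (ramp_integral \<beta> y w t) (ramp_integral \<beta> y w 0) < e"
    using assms by (auto simp: isCont_def tendsto_iff)
  then obtain d where d: "0 < d"
    "\<And>t. t \<noteq> 0 \<Longrightarrow> dist t 0 < d \<Longrightarrow> dist (ramp_integral \<beta> y w t) (ramp_integral \<beta> y w 0) < e"
    by (auto simp: eventually_at)
  have small: "ramp_integral \<beta> y w t < e" if "0 < t" "t < d" for t
    using d(2)[of t] that by (auto simp: dist_real_def)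
  have "d \<le> Inf (hit_set \<beta> y w e)" if "hit_set \<beta> y w e \<noteq> {}"
    by (rule cInf_greatest[OF that]) (use small in \<open>force simp: hit_set_def not_less[symmetric]\<close>)
  then show ?thesis using d by (cases "hit_set \<beta> y w e = {}") (auto simp: clock_ramp)
qed

lemma clock_ramp_zero: "0 < e \<Longrightarrow> clock (\<lambda>l. max (0*l) 0) y w e = \<infinity>"
  by (rule clock_ramp_eq_infinity) (simp add: ramp_integral_def)

lemma clock_ramp_up:
  assumes w: "0 < w" and c: "0 < c" and e: "0 < e"
  shows "clock (\<lambda>l. max (c*l) 0) y w e = ereal ((sqrt ((max y 0)^2 + 2*w*e/c) - y) / w)"
proof (rule clock_ramp_eqI)
  define m where "m = max y 0"
  define R where "R = sqrt (m^2 + 2*w*e/c)"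
  have pos: "0 < 2*w*e/c" using w c e by simp
  have m0: "0 \<le> m" unfolding m_def by simp
  have arg: "0 \<le> m^2 + 2*w*e/c" by (intro add_nonneg_nonneg) (use pos in auto)
  have R2: "R^2 = m^2 + 2*w*e/c" unfolding R_def by (rule real_sqrt_pow2[OF arg])
  have R0: "0 \<le> R" unfolding R_def using arg by simp
  have Rm: "m < R"
  proof (rule ccontr)
    assume "\<not> m < R" then have "R \<le> m" by simp
    then have "R^2 \<le> m^2" using R0 by (simp add: power_mono)
    then show False using R2 pos by simp
  qed
  have ym: "y \<le> m" unfolding m_def by simp
  show "0 < (sqrt ((max y 0)^2 + 2*w*e/c) - y) / w"
    using Rm ym w unfolding R_def m_def by simp
  have yt: "y + w * ((R - y)/w) = R" using w by simp
  show "e \<le> ramp_integral c y w ((sqrt ((max y 0)^2 + 2*w*e/c) - y) / w)"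
    unfolding ramp_integral_pos_rate[OF w c] R_def[symmetric] m_def[symmetric] yt
    using R0 R2 c w by (simp add: max_absorb1 field_simps)
  fix t assume t: "0 < t" "t < (sqrt ((max y 0)^2 + 2*w*e/c) - y) / w"
  then have "y + w*t < R" using w unfolding R_def[symmetric] m_def[symmetric] by (simp add: field_simps)
  then have "max (y+w*t) 0 < R" using Rm m0 by simp
  then have "(max (y+w*t) 0)^2 < R^2" by (intro power_strict_mono) auto
  then have "c * ((max (y+w*t) 0)^2 - m^2) < c * (R^2 - m^2)" using c by simp
  then have "c * ((max (y+w*t) 0)^2 - m^2) / (2*w) < c * (R^2 - m^2) / (2*w)" using w
    by (simp add: divide_strict_right_mono)
  also have "\<dots> = e" using R2 c w by (simp add: field_simps)
  finally show "ramp_integral c y w t < e" unfolding ramp_integral_pos_rate[OF w c] m_def .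
qed

lemma clock_ramp_down:
  assumes w: "0 < w" and c: "0 < c" and e: "0 < e" and y: "y < 0" and ec: "e \<le> c*y^2/(2*w)"
  shows "clock (\<lambda>l. max ((-c)*l) 0) y w e = ereal ((- sqrt (y^2 - 2*w*e/c) - y) / w)"
proof (rule clock_ramp_eqI)
  define Q where "Q = sqrt (y^2 - 2*w*e/c)"
  have pos: "0 < 2*w*e/c" using w c e by simp
  have "2*w*e \<le> c*y^2" using ec w by (simp add: field_simps)
  then have "2*w*e/c \<le> y^2" using c by (simp add: pos_divide_le_eq[OF c] mult.commute)
  then have nn: "0 \<le> y^2 - 2*w*e/c" by simp
  have Q2: "Q^2 = y^2 - 2*w*e/c" unfolding Q_def by (rule real_sqrt_pow2[OF nn])
  have Q0: "0 \<le> Q" unfolding Q_def using nn by simp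
  have Qy: "Q < -y"
  proof (rule ccontr)
    assume "\<not> Q < -y" then have "-y \<le> Q" by simp
    then have "(-y)^2 \<le> Q^2" using y by (intro power_mono) auto
    then show False using Q2 pos by simp
  qed
  show "0 < (- sqrt (y^2 - 2*w*e/c) - y) / w" using Qy w unfolding Q_def by simp
  have yt: "y + w * ((- Q - y)/w) = - Q" using w by simp
  have my: "max (-y) 0 = -y" using y by simp
  show "e \<le> ramp_integral (-c) y w ((- sqrt (y^2 - 2*w*e/c) - y) / w)"
    unfolding ramp_integral_neg_rate[OF w c] Q_def[symmetric] yt my
    using Q0 Q2 c w by (simp add: max_absorb1 field_simps)
  fix t assume t: "0 < t" "t < (- sqrt (y^2 - 2*w*e/c) - y) / w"
  then have "y + w*t < - Q" using w unfolding Q_def[symmetric] by (simp add: field_simps)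
  then have "Q < max (-(y+w*t)) 0" using Q0 by simp
  then have "Q^2 < (max (-(y+w*t)) 0)^2" using Q0 by (intro power_strict_mono) auto
  then have "c * (y^2 - (max (-(y+w*t)) 0)^2) < c * (y^2 - Q^2)" using c by simp
  then have "c * (y^2 - (max (-(y+w*t)) 0)^2) / (2*w) < c * (y^2 - Q^2) / (2*w)" using w
    by (simp add: divide_strict_right_mono)
  also have "\<dots> = e" using Q2 c w by (simp add: field_simps)
  finally show "ramp_integral (-c) y w t < e"
    unfolding ramp_integral_neg_rate[OF w c] my by (simp add: power2_eq_square)
qed

lemma clock_ramp_down_infinity:
  assumes w: "0 < w" and c: "0 < c" and e: "0 < e" and n: "\<not> (y < 0 \<and> e \<le> c*y^2/(2*w))"
  shows "clock (\<lambda>l. max ((-c)*l) 0) y w e = \<infinity>"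
proof (rule clock_ramp_eq_infinity)
  fix t :: real assume t: "0 < t"
  have "ramp_integral (-c) y w t \<le> c * (max (-y) 0)^2 / (2*w)"
    unfolding ramp_integral_neg_rate[OF w c] using c w
    by (intro divide_right_mono mult_left_mono) auto
  also have "\<dots> < e"
  proof (cases "y < 0")
    case True
    then show ?thesis using n by (simp add: max_def power2_eq_square)
  next
    case False then show ?thesis using e by simp
  qed
  finally show "ramp_integral (-c) y w t < e" .
qed

lemma ereal_rat_between:
  assumes "ereal t < b"
  obtains r :: rat where "t < real_of_rat r" "ereal (real_of_rat r) < b"
proof -
  obtain z where z: "ereal t < ereal z" "ereal z < b" using ereal_dense2[OF assms] by blast
  then obtain q where q: "q \<in> \<rat>" "t < q" "q < z" using Rats_dense_in_real[of t z] by auto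
  then obtain r where "q = real_of_rat r" by (auto simp: Rats_def)
  with q z have "ereal (real_of_rat r) < b" using less_trans[of "ereal (real_of_rat r)" "ereal z" b] by simp
  with q \<open>q = real_of_rat r\<close> show thesis by (intro that) auto
qed

lemma clock_ramp_less_iff:
  "clock (\<lambda>l. max (\<beta>*l) 0) y w e < b \<longleftrightarrow>
     (\<exists>r::rat. 0 < real_of_rat r \<and> ereal (real_of_rat r) < b \<and> e \<le> ramp_integral \<beta> y w (real_of_rat r))"
proof
  assume less: "clock (\<lambda>l. max (\<beta>*l) 0) y w e < b"
  then have ne: "hit_set \<beta> y w e \<noteq> {}" by (auto simp: clock_ramp split: if_splits)
  with less obtain r :: rat where r: "Inf (hit_set \<beta> y w e) < real_of_rat r" "ereal (real_of_rat r) < b"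
    by (auto simp: clock_ramp elim: ereal_rat_between)
  then obtain t where "t \<in> hit_set \<beta> y w e" "t < real_of_rat r" using cInf_lessD[OF ne] by blast
  then have "real_of_rat r \<in> hit_set \<beta> y w e" by (auto intro: hit_set_upward_closed)
  with r show "\<exists>r::rat. 0 < real_of_rat r \<and> ereal (real_of_rat r) < b \<and> e \<le> ramp_integral \<beta> y w (real_of_rat r)"
    by (auto simp: hit_set_def)
next
  assume "\<exists>r::rat. 0 < real_of_rat r \<and> ereal (real_of_rat r) < b \<and> e \<le> ramp_integral \<beta> y w (real_of_rat r)"
  then obtain r :: rat where r: "real_of_rat r \<in> hit_set \<beta> y w e" "ereal (real_of_rat r) < b"
    by (auto simp: hit_set_def)
  have "Inf (hit_set \<beta> y w e) \<le> real_of_rat r"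
    by (rule cInf_lower[OF r(1)]) (auto simp: hit_set_def bdd_below_def intro: exI[of _ 0])
  then have "ereal (Inf (hit_set \<beta> y w e)) < b" using r(2) by (metis ereal_less_eq(3) le_less_trans)
  with r show "clock (\<lambda>l. max (\<beta>*l) 0) y w e < b" by (auto simp: clock_ramp)
qed

lemma borel_measurable_ramp_integral [measurable]:
  "y \<in> borel_measurable M \<Longrightarrow> (\<lambda>\<omega>. ramp_integral \<beta> (y \<omega>) w t) \<in> borel_measurable M"
  unfolding ramp_integral_def by (cases "w = 0 \<or> \<beta> = 0") simp_all

lemma borel_measurable_clock_ramp:
  assumes [measurable]: "y \<in> borel_measurable M" "e \<in> borel_measurable M"
  shows "(\<lambda>\<omega>. clock (\<lambda>l. max (\<beta>*l) 0) (y \<omega>) w (e \<omega>)) \<in> borel_measurable M"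
  by (rule borel_measurableI_less) (unfold clock_ramp_less_iff, measurable)

section \<open>Hitting times and independent coordinates\<close>

lemma sum_atMost_reflect: "(\<Sum>g\<le>m. f (m - g)) = (\<Sum>d\<le>(m::nat). f d)"
  using sum.atLeastAtMost_rev[of f 0 m] by (simp add: atMost_atLeast0)

lemma borel_measurable_Inf_hit:
  fixes lo :: "'a \<Rightarrow> real" and c :: "'i::countable \<Rightarrow> 'a \<Rightarrow> real" and P :: "'a \<Rightarrow> real \<Rightarrow> bool"
  assumes [measurable]: "lo \<in> borel_measurable M" "\<And>i. c i \<in> borel_measurable M"
      "Measurable.pred M (\<lambda>\<omega>. P \<omega> (lo \<omega>))" "\<And>i. Measurable.pred M (\<lambda>\<omega>. P \<omega> (c i \<omega>))"
    and reduce: "\<And>\<omega> t b. lo \<omega> \<le> t \<Longrightarrow> ereal t < b \<Longrightarrow> P \<omega> t \<Longrightarrow>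
        (ereal (lo \<omega>) < b \<and> P \<omega> (lo \<omega>)) \<or> (\<exists>i. lo \<omega> \<le> c i \<omega> \<and> ereal (c i \<omega>) < b \<and> P \<omega> (c i \<omega>))"
  shows "(\<lambda>\<omega>. Inf {t. lo \<omega> \<le> t \<and> P \<omega> t}) \<in> borel_measurable M"
proof (rule borel_measurableI_less)
  fix z :: real
  define R where "R \<omega> b \<longleftrightarrow> (ereal (lo \<omega>) < b \<and> P \<omega> (lo \<omega>))
    \<or> (\<exists>i. lo \<omega> \<le> c i \<omega> \<and> ereal (c i \<omega>) < b \<and> P \<omega> (c i \<omega>))" for \<omega> b
  have hit_iff: "(\<exists>t. lo \<omega> \<le> t \<and> ereal t < b \<and> P \<omega> t) \<longleftrightarrow> R \<omega> b" for \<omega> b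
    using reduce unfolding R_def by blast
  \<comment> \<open>\<open>Inf {}\<close> is an unspecified real, so the empty case must be kept as it is\<close>
  have "Inf {t. lo \<omega> \<le> t \<and> P \<omega> t} < z \<longleftrightarrow>
      (R \<omega> \<infinity> \<and> R \<omega> (ereal z)) \<or> (\<not> R \<omega> \<infinity> \<and> Inf ({}::real set) < z)" for \<omega>
  proof (cases "R \<omega> \<infinity>")
    case True
    define A where "A = {t. lo \<omega> \<le> t \<and> P \<omega> t}"
    have "A \<noteq> {}" using True hit_iff[of \<omega> \<infinity>] by (auto simp: A_def)
    moreover have "bdd_below A" unfolding A_def bdd_below_def by auto
    ultimately have "Inf A < z \<longleftrightarrow> (\<exists>t\<in>A. t < z)" by (rule cInf_less_iff)
    then show ?thesis using True hit_iff[of \<omega> "ereal z"] by (auto simp: A_def)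
  next
    case False
    then have "{t. lo \<omega> \<le> t \<and> P \<omega> t} = {}" using hit_iff[of \<omega> \<infinity>] by auto
    then show ?thesis using False by (simp only:) simp
  qed
  moreover have "Measurable.pred M (\<lambda>\<omega>. R \<omega> b)" for b unfolding R_def by measurable
  ultimately show "{\<omega> \<in> space M. Inf {t. lo \<omega> \<le> t \<and> P \<omega> t} < z} \<in> sets M"
    by simp
qed

lemma (in prob_space) prob_indep_var_vimage:
  assumes iv: "indep_var Ma U Mb W" and S: "S \<in> sets Ma" and dW: "distr M Mb W = Q"
    and \<psi>: "\<psi> \<in> borel_measurable Mb" and A: "A \<in> sets borel"
  shows "prob {\<omega> \<in> space M. U \<omega> \<in> S \<and> \<psi> (W \<omega>) \<in> A} =
         prob {\<omega> \<in> space M. U \<omega> \<in> S} * measure Q (\<psi> -` A \<inter> space Mb)"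
proof -
  have W: "W \<in> measurable M Mb" using iv by (rule indep_var_rv2)
  define B where "B = \<psi> -` A \<inter> space Mb"
  have B: "B \<in> sets Mb" unfolding B_def using \<psi> A by (rule measurable_sets)
  have "prob ((\<lambda>x. (U x, W x)) -` (S \<times> B) \<inter> space M) = prob (U -` S \<inter> space M) * prob (W -` B \<inter> space M)"
    by (rule indep_varD[OF iv S B])
  moreover have "(\<lambda>x. (U x, W x)) -` (S \<times> B) \<inter> space M = {\<omega> \<in> space M. U \<omega> \<in> S \<and> \<psi> (W \<omega>) \<in> A}"
    using measurable_space[OF W] unfolding B_def by auto
  moreover have "prob (W -` B \<inter> space M) = measure Q B"
    using measure_distr[OF W B] dW by simp
  ultimately show ?thesis unfolding B_def by (simp add: vimage_def Int_def conj_commute)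
qed

lemma borel_measurable_sqrt_weighted_sum:
  "(\<lambda>w. sqrt (2 * (\<Sum>j\<in>{g..N}. c j * w j))) \<in> borel_measurable (\<Pi>\<^sub>M j\<in>{g..N}. borel)"
proof -
  have "(\<lambda>w. w j) \<in> borel_measurable (\<Pi>\<^sub>M j\<in>{g..N}. borel)" if "j \<in> {g..N}" for j
    using measurable_component_singleton[OF that, of "\<lambda>_. borel"] by simp
  then show ?thesis by measurable
qed

abbreviation exp_law :: "real measure" where
  "exp_law \<equiv> density lborel (exponential_density 1)"

lemma distr_borel_exponential:
  assumes "distributed M lborel X (exponential_density 1)"
  shows "distr M borel X = exp_law"
proof -
  have "distr M borel X = distr M lborel X" by (rule distr_cong) auto
  also have "\<dots> = exp_law" by (rule distributed_distr_eq_density[OF assms])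
  finally show ?thesis .
qed

lemma (in prob_space) distr_restrict_indep_vars:
  assumes indep: "indep_vars (\<lambda>_. borel) X I" and "I \<noteq> {}"
    and law: "\<And>i. i \<in> I \<Longrightarrow> distr M borel (X i) = Q"
  shows "distr M (\<Pi>\<^sub>M i\<in>I. borel) (\<lambda>\<omega>. \<lambda>i\<in>I. X i \<omega>) = (\<Pi>\<^sub>M i\<in>I. Q)"
proof -
  have rv: "\<And>i. i \<in> I \<Longrightarrow> random_variable borel (X i)"
    using indep by (simp add: indep_vars_def)
  have "distr M (\<Pi>\<^sub>M i\<in>I. borel) (\<lambda>\<omega>. \<lambda>i\<in>I. X i \<omega>) = (\<Pi>\<^sub>M i\<in>I. distr M borel (X i))"
    using indep_vars_iff_distr_eq_PiM'[OF assms(2) rv] indep by simp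
  also have "\<dots> = (\<Pi>\<^sub>M i\<in>I. Q)" by (rule PiM_cong) (simp_all add: law)
  finally show ?thesis .
qed

lemma measure_PiM_reindex_vimage:
  fixes Q :: "real measure" and \<psi> :: "('i \<Rightarrow> real) \<Rightarrow> real"
  assumes f: "inj_on f I" and Q: "prob_space Q" "sets Q = sets borel"
    and \<psi>: "\<psi> \<in> borel_measurable (\<Pi>\<^sub>M i\<in>I. borel)" and A: "A \<in> sets borel"
  shows "measure (\<Pi>\<^sub>M j\<in>f ` I. Q) ((\<lambda>u. \<psi> (\<lambda>i\<in>I. u (f i))) -` A \<inter> space (\<Pi>\<^sub>M j\<in>f ` I. borel))
       = measure (\<Pi>\<^sub>M i\<in>I. Q) (\<psi> -` A \<inter> space (\<Pi>\<^sub>M i\<in>I. borel))"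
proof -
  define \<rho> where "\<rho> u = (\<lambda>i\<in>I. u (f i))" for u :: "_ \<Rightarrow> real"
  have sets_I: "sets (\<Pi>\<^sub>M i\<in>I. Q) = sets (\<Pi>\<^sub>M i\<in>I. borel)"
    and sets_fI: "sets (\<Pi>\<^sub>M j\<in>f ` I. Q) = sets (\<Pi>\<^sub>M j\<in>f ` I. borel)"
    using Q(2) by (auto intro!: sets_PiM_cong)
  then have space_I: "space (\<Pi>\<^sub>M i\<in>I. Q) = space (\<Pi>\<^sub>M i\<in>I. borel)"
    and space_fI: "space (\<Pi>\<^sub>M j\<in>f ` I. Q) = space (\<Pi>\<^sub>M j\<in>f ` I. borel)"
    by (auto dest: sets_eq_imp_space_eq)
  have "\<rho> \<in> measurable (\<Pi>\<^sub>M j\<in>f ` I. borel) (\<Pi>\<^sub>M i\<in>I. borel)"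
    unfolding \<rho>_def by (intro measurable_restrict measurable_component_singleton) auto
  then have \<rho>: "\<rho> \<in> measurable (\<Pi>\<^sub>M j\<in>f ` I. Q) (\<Pi>\<^sub>M i\<in>I. Q)"
    by (simp add: measurable_def sets_I sets_fI space_I space_fI)
  have S: "\<psi> -` A \<inter> space (\<Pi>\<^sub>M i\<in>I. borel) \<in> sets (\<Pi>\<^sub>M i\<in>I. Q)"
    unfolding sets_I using \<psi> A by (rule measurable_sets)
  have "distr (\<Pi>\<^sub>M j\<in>f ` I. Q) (\<Pi>\<^sub>M i\<in>I. Q) \<rho> = (\<Pi>\<^sub>M i\<in>I. Q)"
    using distr_PiM_reindex[of "f ` I" "\<lambda>_. Q" f I] f Q(1) unfolding \<rho>_def[abs_def] by simp
  then have "measure (\<Pi>\<^sub>M i\<in>I. Q) (\<psi> -` A \<inter> space (\<Pi>\<^sub>M i\<in>I. borel))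
      = measure (\<Pi>\<^sub>M j\<in>f ` I. Q) (\<rho> -` (\<psi> -` A \<inter> space (\<Pi>\<^sub>M i\<in>I. borel)) \<inter> space (\<Pi>\<^sub>M j\<in>f ` I. Q))"
    using measure_distr[OF \<rho> S] by simp
  also have "\<rho> -` (\<psi> -` A \<inter> space (\<Pi>\<^sub>M i\<in>I. borel)) \<inter> space (\<Pi>\<^sub>M j\<in>f ` I. Q)
      = (\<lambda>u. \<psi> (\<lambda>i\<in>I. u (f i))) -` A \<inter> space (\<Pi>\<^sub>M j\<in>f ` I. borel)"
    using measurable_space[OF \<rho>] by (auto simp: \<rho>_def space_I space_fI)
  finally show ?thesis ..
qed

section \<open>The noiseless process started below zero\<close>

locale noiseless =
  fixes n N0 N1 :: nat and v :: "nat \<Rightarrow> real" and l :: real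
  assumes N0_less: "N0 < n" and v_pos: "\<And>j. j \<le> N0 \<Longrightarrow> 0 < v j" and l_neg: "l < 0"
begin

abbreviation c :: "nat \<Rightarrow> real" where "c \<equiv> cc n N0 N1 v"
abbreviation a :: "nat \<Rightarrow> nat \<Rightarrow> real \<Rightarrow> real" where "a \<equiv> nl_rate n N0 N1 v"
abbreviation ch :: "(nat \<Rightarrow> nat \<Rightarrow> real) \<Rightarrow> nat \<Rightarrow> ereal \<times> nat \<times> real" where
  "ch e \<equiv> jchain n a v N0 l e"

definition slope :: "nat \<Rightarrow> nat \<Rightarrow> real" where
  "slope i j = (if j = Suc i \<and> i < n then c i else if i = Suc j \<and> j < n then - c j else 0)"

lemma cc_pos: "i \<le> N0 \<Longrightarrow> 0 < c i"
  unfolding cc_def by (auto intro!: sum_pos v_pos)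

lemma cc_nonneg: "0 \<le> c i"
  unfolding cc_def by (auto intro!: sum_nonneg less_imp_le[OF sum_pos] simp: less_imp_le v_pos)

lemma clock_nl_rate: "clock (a i j) y w e = clock (\<lambda>l. max (slope i j * l) 0) y w e"
proof -
  have "a i j = (\<lambda>l. max (slope i j * l) 0)"
    using cc_nonneg[of i] cc_nonneg[of j]
    by (auto simp: fun_eq_iff nl_rate_def slope_def max_mult_distrib_left)
  then show ?thesis by simp
qed

lemma slope_down: "0 < x \<Longrightarrow> x \<le> n \<Longrightarrow> slope x (x-1) = - c (x-1)"
  unfolding slope_def by auto

lemma slope_up: "x < n \<Longrightarrow> slope x (Suc x) = c x"
  unfolding slope_def by auto

lemma slope_other: "j \<noteq> Suc x \<Longrightarrow> j \<noteq> x - 1 \<or> x = 0 \<Longrightarrow> slope x j = 0"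
  unfolding slope_def by auto

lemma hold_target_eqI:
  assumes j0: "j0 \<le> n" and c0: "clock (a x j0) y (v x) (e j0) = ereal \<tau>"
    and others: "\<And>j. j \<le> n \<Longrightarrow> j \<noteq> j0 \<Longrightarrow> ereal \<tau> < clock (a x j) y (v x) (e j)"
  shows "hold n a v x y e = ereal \<tau>" "target n a v x y e = j0"
proof -
  have le: "ereal \<tau> \<le> clock (a x j) y (v x) (e j)" if "j \<le> n" for j
    using others[of j] c0 that by (cases "j = j0") auto
  show h: "hold n a v x y e = ereal \<tau>" unfolding hold_def
  proof (rule Min_eqI)
    show "ereal \<tau> \<in> (\<lambda>j. clock (a x j) y (v x) (e j)) ` {0..n}"
      using j0 c0 by (intro image_eqI[of _ _ j0]) auto
  qed (use le in auto)
  show "target n a v x y e = j0" unfolding target_def h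
  proof (rule Least_equality)
    fix j assume "j \<le> n \<and> clock (a x j) y (v x) (e j) = ereal \<tau>"
    then show "j0 \<le> j" using others[of j] by (cases "j = j0") auto
  qed (use j0 c0 in auto)
qed

lemma jchain_Suc_finite:
  assumes "ch e k = (ereal T, x, y)" "hold n a v x y (e k) = ereal \<tau>"
  shows "ch e (Suc k) = (ereal (T + \<tau>), target n a v x y (e k), y + v x * \<tau>)"
  using assms by simp

lemma hold_nonneg: "0 \<le> hold n a v x y e"
  unfolding hold_def by (subst Min_ge_iff) (auto simp: clock_nl_rate clock_ramp_nonneg)

lemma hold_pos: "(\<And>j. 0 < e j) \<Longrightarrow> 0 < hold n a v x y e"
  unfolding hold_def by (subst Min_gr_iff) (auto simp: clock_nl_rate clock_ramp_pos)

lemma jchain_time_mono: "k \<le> k' \<Longrightarrow> fst (ch e k) \<le> fst (ch e k')"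
proof (induction k' rule: dec_induct)
  case (step m)
  obtain T x y where "ch e m = (T, x, y)" by (metis prod.exhaust)
  then have "fst (ch e m) \<le> fst (ch e (Suc m))"
    using hold_nonneg[of x y "e m"] by (auto simp: Let_def add_increasing2)
  with step show ?case by order
qed simp

lemma jchain_time_nonneg: "0 \<le> fst (ch e k)"
  using jchain_time_mono[of 0 k e] by simp

lemma jchain_time_less_Suc:
  assumes "\<And>j. 0 < e k j" "ch e k = (ereal T, x, y)"
  shows "ereal T < fst (ch e (Suc k))"
proof -
  have h: "0 < hold n a v x y (e k)" using hold_pos assms(1) by blast
  then consider "hold n a v x y (e k) = \<infinity>" | \<tau> where "hold n a v x y (e k) = ereal \<tau>"
    by (cases "hold n a v x y (e k)") auto
  then show ?thesis using assms h by cases (simp_all add: Let_def)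
qed

declare jchain.simps(2) [simp del]

lemma jchain_level_step:
  assumes "ch e k = (ereal T, x, y)" "ch e (Suc k) = (ereal T', x', y')"
  shows "y' = y + v x * (T' - T)"
proof (cases "hold n a v x y (e k)")
  case (real \<tau>)
  then show ?thesis using jchain_Suc_finite[OF assms(1) real] assms(2) by simp
next
  case PInf
  then show ?thesis using assms by (simp add: Let_def jchain.simps(2))
next
  case MInf
  then show ?thesis using hold_nonneg[of x y "e k"] by simp
qed

lemma path_on_piece:
  assumes chk: "ch e k = (ereal Tk, x, y)" and t: "Tk \<le> t" "ereal t < fst (ch e (Suc k))"
  shows "path n a v N0 l e t = (x, y + v x * (t - Tk))"
proof -
  have "(LEAST k. ereal t < fst (ch e (Suc k))) = k"
  proof (rule Least_equality)
    fix k' assume k': "ereal t < fst (ch e (Suc k'))"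
    show "k \<le> k'"
    proof (rule ccontr)
      assume "\<not> k \<le> k'"
      then have "fst (ch e (Suc k')) \<le> fst (ch e k)" by (intro jchain_time_mono) auto
      then have "fst (ch e (Suc k')) \<le> ereal t" using t(1) chk order_trans by fastforce
      with k' show False by simp
    qed
  qed (use t in auto)
  then show ?thesis unfolding path_def Let_def using chk by simp
qed

lemma jump_interval_exists:
  assumes "0 \<le> t" "ereal t < fst (ch e (Suc K))"
  shows "\<exists>k\<le>K. fst (ch e k) \<le> ereal t \<and> ereal t < fst (ch e (Suc k))"
  using assms(2)
proof (induction K)
  case (Suc K)
  show ?case
  proof (cases "ereal t < fst (ch e (Suc K))")
    case True then show ?thesis using Suc.IH by (meson le_Suc_eq)
  next
    case False then show ?thesis using Suc.prems by (intro exI[of _ "Suc K"]) auto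
  qed
qed (use assms(1) in auto)

lemma jchain_Suc_down:
  assumes ep: "\<And>j. 0 < e k j" and x: "0 < x" "x \<le> N0" and y: "y < 0"
    and ec: "e k (x-1) \<le> c (x-1) * y^2 / (2 * v x)"
    and chk: "ch e k = (ereal T, x, y)"
  shows "ch e (Suc k) = (ereal (T + (- sqrt (y^2 - 2 * v x * e k (x-1) / c (x-1)) - y) / v x), x - 1,
            - sqrt (y^2 - 2 * v x * e k (x-1) / c (x-1)))"
proof -
  define Q where "Q = sqrt (y^2 - 2 * v x * e k (x-1) / c (x-1))"
  define R where "R = sqrt ((max y 0)^2 + 2 * v x * e k (Suc x) / c x)"
  define \<tau> where "\<tau> = (- Q - y) / v x"
  have w: "0 < v x" using x v_pos by auto
  have cd: "0 < c (x-1)" and cu: "0 < c x" and xn: "x < n" using x cc_pos N0_less by auto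
  have c1: "clock (a x (x-1)) y (v x) (e k (x-1)) = ereal \<tau>"
    unfolding clock_nl_rate slope_down[OF x(1) less_imp_le[OF xn]] \<tau>_def Q_def
    by (rule clock_ramp_down) (use w cd ep y ec in auto)
  have R0: "0 < R" unfolding R_def using ep w cu
    by (intro real_sqrt_gt_zero add_nonneg_pos) auto
  have "2 * v x * e k (x-1) / c (x-1) \<le> y^2"
    using ec w cd by (simp add: field_simps)
  then have Q0: "0 \<le> Q" unfolding Q_def by simp
  have others: "ereal \<tau> < clock (a x j) y (v x) (e k j)" if "j \<le> n" "j \<noteq> x - 1" for j
  proof (cases "j = Suc x")
    case True
    have "clock (a x j) y (v x) (e k j) = ereal ((R - y) / v x)"
      unfolding True clock_nl_rate slope_up[OF xn] R_def
      by (rule clock_ramp_up) (use w cu ep in auto)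
    moreover have "\<tau> < (R - y) / v x"
      unfolding \<tau>_def using R0 Q0 w by (simp add: divide_strict_right_mono)
    ultimately show ?thesis by simp
  next
    case False
    then have "slope x j = 0" using that by (intro slope_other) auto
    then show ?thesis unfolding clock_nl_rate using clock_ramp_zero ep by simp
  qed
  have "hold n a v x y (e k) = ereal \<tau>" "target n a v x y (e k) = x - 1"
    using hold_target_eqI[OF _ c1 others] xn by auto
  moreover have "y + v x * \<tau> = - Q" unfolding \<tau>_def using w by simp
  ultimately show ?thesis using jchain_Suc_finite[OF chk] unfolding \<tau>_def Q_def by simp
qed

lemma jchain_Suc_up:
  assumes ep: "\<And>j. 0 < e k j" and x: "x \<le> N0"
    and no_down: "x = 0 \<or> \<not> (y < 0 \<and> e k (x-1) \<le> c (x-1) * y^2 / (2 * v x))"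
    and chk: "ch e k = (ereal T, x, y)"
  shows "ch e (Suc k) = (ereal (T + (sqrt ((max y 0)^2 + 2 * v x * e k (Suc x) / c x) - y) / v x), Suc x,
            sqrt ((max y 0)^2 + 2 * v x * e k (Suc x) / c x))"
proof -
  define R where "R = sqrt ((max y 0)^2 + 2 * v x * e k (Suc x) / c x)"
  define \<tau> where "\<tau> = (R - y) / v x"
  have w: "0 < v x" using x v_pos by auto
  have cu: "0 < c x" and xn: "x < n" using x cc_pos N0_less by auto
  have c1: "clock (a x (Suc x)) y (v x) (e k (Suc x)) = ereal \<tau>"
    unfolding clock_nl_rate slope_up[OF xn] \<tau>_def R_def
    by (rule clock_ramp_up) (use w cu ep in auto)
  have others: "ereal \<tau> < clock (a x j) y (v x) (e k j)" if "j \<le> n" "j \<noteq> Suc x" for j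
  proof (cases "0 < x \<and> j = x - 1")
    case True
    have "0 < c (x-1)" using x cc_pos by auto
    then have "clock (a x j) y (v x) (e k j) = \<infinity>"
      unfolding clock_nl_rate True[THEN conjunct2] slope_down[OF True[THEN conjunct1] less_imp_le[OF xn]]
      by (intro clock_ramp_down_infinity) (use w ep no_down True in auto)
    then show ?thesis by simp
  next
    case False
    then have "slope x j = 0" using that by (intro slope_other) auto
    then show ?thesis unfolding clock_nl_rate using clock_ramp_zero ep by simp
  qed
  have "hold n a v x y (e k) = ereal \<tau>" "target n a v x y (e k) = Suc x"
    using hold_target_eqI[OF _ c1 others] xn by auto
  moreover have "y + v x * \<tau> = R" unfolding \<tau>_def using w by simp
  ultimately show ?thesis using jchain_Suc_finite[OF chk] unfolding \<tau>_def R_def by simp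
qed

text \<open>\<open>e k j\<close> is the exponential variable of the \<open>k\<close>-th jump attached to target \<open>j\<close>;
  \<open>descends e k\<close> says that the \<open>k\<close>-th jump leads from \<open>N0 - k\<close> down to \<open>N0 - k - 1\<close>,
  after which the memory is \<open>desc_level e (Suc k)\<close>.\<close>

primrec desc_level :: "(nat \<Rightarrow> nat \<Rightarrow> real) \<Rightarrow> nat \<Rightarrow> real" where
  "desc_level e 0 = l"
| "desc_level e (Suc k) = - sqrt ((desc_level e k)^2 - 2 * v (N0-k) * e k (N0-k-1) / c (N0-k-1))"

definition descends :: "(nat \<Rightarrow> nat \<Rightarrow> real) \<Rightarrow> nat \<Rightarrow> bool" where
  "descends e k \<longleftrightarrow> k < N0 \<and> desc_level e k < 0
     \<and> e k (N0-k-1) \<le> c (N0-k-1) * (desc_level e k)^2 / (2 * v (N0-k))"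

definition n_desc :: "(nat \<Rightarrow> nat \<Rightarrow> real) \<Rightarrow> nat" where
  "n_desc e = (LEAST k. \<not> descends e k)"

definition rev_site :: "(nat \<Rightarrow> nat \<Rightarrow> real) \<Rightarrow> nat" where
  "rev_site e = N0 - n_desc e"

definition asc_level_sq :: "(nat \<Rightarrow> nat \<Rightarrow> real) \<Rightarrow> nat \<Rightarrow> real" where
  "asc_level_sq e i =
     2 * (\<Sum>m\<le>i. lam n N0 N1 v (rev_site e + m) * e (n_desc e + m) (rev_site e + m + 1))"

definition asc_level :: "(nat \<Rightarrow> nat \<Rightarrow> real) \<Rightarrow> nat \<Rightarrow> real" where
  "asc_level e i = sqrt (asc_level_sq e i)"

lemma n_desc_le: "n_desc e \<le> N0"
  unfolding n_desc_def by (rule Least_le) (simp add: descends_def)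

lemma descends_before_n_desc: "k < n_desc e \<Longrightarrow> descends e k"
  unfolding n_desc_def using not_less_Least by blast

lemma not_descends_n_desc: "\<not> descends e (n_desc e)"
  unfolding n_desc_def by (rule LeastI[of _ N0]) (simp add: descends_def)

lemma n_desc_eq_iff: "n_desc e = d \<longleftrightarrow> (\<forall>k<d. descends e k) \<and> \<not> descends e d"
proof
  assume "(\<forall>k<d. descends e k) \<and> \<not> descends e d"
  then show "n_desc e = d"
    unfolding n_desc_def by (intro Least_equality) (auto simp: not_less[symmetric])
qed (use descends_before_n_desc not_descends_n_desc in blast)

lemma desc_level_nonpos: "k \<le> n_desc e \<Longrightarrow> desc_level e k \<le> 0"
proof (cases k)
  case (Suc k')
  assume "k \<le> n_desc e"
  then have "descends e k'" using Suc descends_before_n_desc by simp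
  then have "2 * v (N0-k') * e k' (N0-k'-1) / c (N0-k'-1) \<le> (desc_level e k')^2"
    using v_pos[of "N0-k'"] cc_pos[of "N0-k'-1"] by (simp add: descends_def field_simps)
  then show ?thesis using Suc by simp
qed (use l_neg in simp)

lemma jchain_descent:
  assumes ep: "\<And>k j. 0 < e k j"
  shows "k \<le> n_desc e \<Longrightarrow> \<exists>T. ch e k = (ereal T, N0 - k, desc_level e k)"
proof (induction k)
  case (Suc k)
  then obtain T where chk: "ch e k = (ereal T, N0 - k, desc_level e k)" by auto
  have "descends e k" using Suc.prems descends_before_n_desc by simp
  then have "k < N0" "desc_level e k < 0"
    "e k (N0-k-1) \<le> c (N0-k-1) * (desc_level e k)^2 / (2 * v (N0-k))"
    unfolding descends_def by auto
  with jchain_Suc_down[OF ep _ _ _ _ chk] show ?case by simp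
qed simp

lemma asc_level_sq_pos:
  assumes ep: "\<And>k j. 0 < e k j" and i: "i \<le> n_desc e"
  shows "0 < asc_level_sq e i"
proof -
  have "0 < lam n N0 N1 v (rev_site e + m) * e (n_desc e + m) (rev_site e + m + 1)" if "m \<le> i" for m
    using that i n_desc_le[of e] ep v_pos cc_pos by (simp add: lam_def rev_site_def)
  then show ?thesis unfolding asc_level_sq_def by (auto intro!: sum_pos)
qed

lemma jchain_ascent:
  assumes ep: "\<And>k j. 0 < e k j"
  shows "i \<le> n_desc e \<Longrightarrow>
    \<exists>T. ch e (Suc (n_desc e + i)) = (ereal T, Suc (rev_site e + i), asc_level e i)"
proof (induction i)
  case 0
  obtain T where chk: "ch e (n_desc e) = (ereal T, rev_site e, desc_level e (n_desc e))"
    using jchain_descent[of e "n_desc e"] ep unfolding rev_site_def by auto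
  have "rev_site e = 0 \<or> \<not> (desc_level e (n_desc e) < 0
     \<and> e (n_desc e) (rev_site e - 1) \<le> c (rev_site e - 1) * (desc_level e (n_desc e))^2 / (2 * v (rev_site e)))"
    using not_descends_n_desc[of e] n_desc_le[of e] unfolding descends_def rev_site_def by auto
  from jchain_Suc_up[OF ep _ this chk] desc_level_nonpos[of "n_desc e" e]
  show ?case by (simp add: rev_site_def asc_level_def asc_level_sq_def lam_def max_absorb2)
next
  case (Suc i)
  then obtain T where chk: "ch e (Suc (n_desc e + i)) = (ereal T, Suc (rev_site e + i), asc_level e i)"
    by auto
  have x: "Suc (rev_site e + i) \<le> N0" using Suc.prems n_desc_le[of e] by (simp add: rev_site_def)
  have y: "0 \<le> asc_level e i"
    using asc_level_sq_pos[of e i, OF ep] Suc.prems by (simp add: asc_level_def)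
  have "(max (asc_level e i) 0)^2 + 2 * v (Suc (rev_site e + i)) * e (Suc (n_desc e + i)) (Suc (Suc (rev_site e + i)))
          / c (Suc (rev_site e + i)) = asc_level_sq e (Suc i)"
    using asc_level_sq_pos[of e i, OF ep] Suc.prems
    by (simp add: asc_level_def asc_level_sq_def lam_def max_absorb1 algebra_simps)
  with jchain_Suc_up[OF ep x _ chk] y show ?case by (simp add: asc_level_def)
qed

definition rev_time :: "(nat \<Rightarrow> nat \<Rightarrow> real) \<Rightarrow> real" where
  "rev_time e = real_of_ereal (fst (ch e (n_desc e))) - desc_level e (n_desc e) / v (rev_site e)"

lemma rev_time_piece:
  assumes ep: "\<And>k j. 0 < e k j"
  shows "fst (ch e (n_desc e)) \<le> ereal (rev_time e)"
    and "ereal (rev_time e) < fst (ch e (Suc (n_desc e)))"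
    and "path n a v N0 l e (rev_time e) = (rev_site e, 0)"
proof -
  obtain TD where chD: "ch e (n_desc e) = (ereal TD, rev_site e, desc_level e (n_desc e))"
    using jchain_descent[of e "n_desc e", OF ep] by (auto simp: rev_site_def)
  obtain T1 where ch1: "ch e (Suc (n_desc e)) = (ereal T1, Suc (rev_site e), asc_level e 0)"
    using jchain_ascent[of e 0, OF ep] by auto
  have w: "0 < v (rev_site e)" using v_pos by (simp add: rev_site_def)
  have "desc_level e (n_desc e) \<le> 0" by (rule desc_level_nonpos) simp
  with w have TD: "TD \<le> rev_time e"
    using chD by (simp add: rev_time_def divide_nonpos_pos)
  have "0 < asc_level e 0" using asc_level_sq_pos[of e 0, OF ep] by (simp add: asc_level_def)
  moreover have "asc_level e 0 = desc_level e (n_desc e) + v (rev_site e) * (T1 - TD)"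
    using jchain_level_step[OF chD ch1] .
  ultimately have T1: "rev_time e < T1"
    using w chD by (simp add: rev_time_def field_simps)
  show "fst (ch e (n_desc e)) \<le> ereal (rev_time e)" using chD TD by simp
  show "ereal (rev_time e) < fst (ch e (Suc (n_desc e)))" using ch1 T1 by simp
  have "path n a v N0 l e (rev_time e) =
      (rev_site e, desc_level e (n_desc e) + v (rev_site e) * (rev_time e - TD))"
    by (rule path_on_piece[OF chD TD]) (use ch1 T1 in simp)
  then show "path n a v N0 l e (rev_time e) = (rev_site e, 0)"
    using w chD by (simp add: rev_time_def)
qed

lemma rev_time_nonneg:
  assumes ep: "\<And>k j. 0 < e k j"
  shows "0 \<le> rev_time e"
  using order_trans[OF jchain_time_nonneg rev_time_piece(1)[of e, OF ep]] by simp

lemma level_neg_before_rev_time: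
  assumes ep: "\<And>k j. 0 < e k j" and t: "0 \<le> t" "t < rev_time e"
  shows "snd (path n a v N0 l e t) < 0"
proof -
  have "ereal t < ereal (rev_time e)" using t by simp
  then have "ereal t < fst (ch e (Suc (n_desc e)))"
    using rev_time_piece(2)[of e, OF ep] by (rule less_trans)
  then obtain k where k: "k \<le> n_desc e" "fst (ch e k) \<le> ereal t" "ereal t < fst (ch e (Suc k))"
    using jump_interval_exists[OF t(1)] by blast
  obtain Tk where chk: "ch e k = (ereal Tk, N0 - k, desc_level e k)"
    using jchain_descent[of e, OF ep k(1)] by auto
  have w: "0 < v (N0 - k)" using v_pos by simp
  have "path n a v N0 l e t = (N0 - k, desc_level e k + v (N0 - k) * (t - Tk))"
    by (rule path_on_piece[OF chk]) (use k chk in auto)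
  moreover have "desc_level e k + v (N0 - k) * (t - Tk) < 0"
  proof (cases "k < n_desc e")
    case True
    obtain Tk1 where chk1: "ch e (Suc k) = (ereal Tk1, N0 - Suc k, desc_level e (Suc k))"
      using jchain_descent[of e "Suc k", OF ep] True by auto
    have "desc_level e (Suc k) = desc_level e k + v (N0 - k) * (Tk1 - Tk)"
      using jchain_level_step[OF chk chk1] .
    moreover have "desc_level e (Suc k) \<le> 0" by (intro desc_level_nonpos) (use True in simp)
    moreover have "t < Tk1" using k(3) chk1 by simp
    ultimately show ?thesis using w by (smt (verit) mult_strict_left_mono)
  next
    case False
    then have "rev_time e = Tk - desc_level e k / v (N0 - k)"
      using k chk by (simp add: rev_time_def rev_site_def)
    with w t(2) show ?thesis by (simp add: field_simps)
  qed
  ultimately show ?thesis by simp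
qed

lemma revT_eq_rev_time:
  assumes ep: "\<And>k j. 0 < e k j"
  shows "revT n a v N0 l e = rev_time e"
  unfolding revT_def
proof (rule cInf_eq_minimum)
  show "rev_time e \<in> {t. 0 \<le> t \<and> 0 \<le> snd (path n a v N0 l e t)}"
    using rev_time_piece(3)[of e, OF ep] rev_time_nonneg[of e, OF ep] by simp
qed (use level_neg_before_rev_time[of e, OF ep] in force)

lemma site_le_N0_before_exit:
  assumes ep: "\<And>k j. 0 < e k j" and t: "0 \<le> t" "ereal t < fst (ch e (Suc (n_desc e + n_desc e)))"
  shows "fst (path n a v N0 l e t) \<le> N0"
proof -
  obtain k where k: "k \<le> n_desc e + n_desc e" "fst (ch e k) \<le> ereal t" "ereal t < fst (ch e (Suc k))"
    using jump_interval_exists[OF t] by blast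
  show ?thesis
  proof (cases "k \<le> n_desc e")
    case True
    obtain Tk where chk: "ch e k = (ereal Tk, N0 - k, desc_level e k)"
      using jchain_descent[of e, OF ep True] by auto
    then show ?thesis using path_on_piece[OF chk, of t] k by simp
  next
    case False
    define i where "i = k - n_desc e - 1"
    have ki: "k = Suc (n_desc e + i)" and i: "i < n_desc e" using False k(1) by (auto simp: i_def)
    obtain Tk where chk: "ch e k = (ereal Tk, Suc (rev_site e + i), asc_level e i)"
      using jchain_ascent[of e i, OF ep] i ki by auto
    then show ?thesis using path_on_piece[OF chk, of t] k i n_desc_le[of e]
      by (simp add: rev_site_def)
  qed
qed

lemma path_at_exitT:
  assumes ep: "\<And>k j. 0 < e k j"
  shows "snd (path n a v N0 l e (exitT n a v N0 l {..N0} e)) = asc_level e (n_desc e)"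
proof -
  define D where "D = n_desc e"
  obtain TX where chX: "ch e (Suc (D + D)) = (ereal TX, Suc (rev_site e + D), asc_level e D)"
    using jchain_ascent[of e D, OF ep] by (auto simp: D_def)
  have site: "Suc (rev_site e + D) = Suc N0" using n_desc_le[of e] by (simp add: rev_site_def D_def)
  have "ereal TX < fst (ch e (Suc (Suc (D + D))))"
    by (rule jchain_time_less_Suc[OF _ chX]) (use ep in auto)
  then have pathX: "path n a v N0 l e TX = (Suc N0, asc_level e D)"
    using path_on_piece[OF chX] site by simp
  have "fst (ch e (Suc (n_desc e))) \<le> ereal TX"
    using jchain_time_mono[of "Suc D" "Suc (D + D)" e] chX by (simp add: D_def)
  from order.strict_trans2[OF rev_time_piece(2)[of e, OF ep] this]
  have rev_TX: "rev_time e \<le> TX" by simp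
  have "exitT n a v N0 l {..N0} e = TX"
    unfolding exitT_def revT_eq_rev_time[of e, OF ep]
  proof (rule cInf_eq_minimum)
    show "TX \<in> {t. rev_time e \<le> t \<and> fst (path n a v N0 l e t) \<notin> {..N0}}"
      using pathX rev_TX by simp
  next
    fix t assume t: "t \<in> {t. rev_time e \<le> t \<and> fst (path n a v N0 l e t) \<notin> {..N0}}"
    with rev_time_nonneg[of e, OF ep] show "TX \<le> t"
      using site_le_N0_before_exit[of e t, OF ep] chX by (force simp: D_def not_le[symmetric])
  qed
  then show ?thesis using pathX by (simp add: D_def)
qed

section \<open>Measurability of the reversal and exit times\<close>

definition jump_time :: "(nat \<Rightarrow> nat \<Rightarrow> real) \<Rightarrow> nat \<Rightarrow> ereal" where
  "jump_time e k = fst (ch e k)"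

definition jump_site :: "(nat \<Rightarrow> nat \<Rightarrow> real) \<Rightarrow> nat \<Rightarrow> nat" where
  "jump_site e k = fst (snd (ch e k))"

definition jump_level :: "(nat \<Rightarrow> nat \<Rightarrow> real) \<Rightarrow> nat \<Rightarrow> real" where
  "jump_level e k = snd (snd (ch e k))"

definition holding :: "(nat \<Rightarrow> nat \<Rightarrow> real) \<Rightarrow> nat \<Rightarrow> ereal" where
  "holding e k = hold n a v (jump_site e k) (jump_level e k) (e k)"

lemma jchain_Suc_eq:
  "ch e (Suc k) =
     (if jump_time e k = \<infinity> \<or> holding e k = \<infinity> then (\<infinity>, jump_site e k, jump_level e k)
      else (jump_time e k + holding e k, target n a v (jump_site e k) (jump_level e k) (e k),
            jump_level e k + v (jump_site e k) * real_of_ereal (holding e k)))"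
  by (cases "ch e k") (simp add: jchain.simps(2) jump_time_def jump_site_def jump_level_def holding_def Let_def)

lemma jump_time_Suc:
  "jump_time e (Suc k) =
     (if jump_time e k = \<infinity> \<or> holding e k = \<infinity> then \<infinity> else jump_time e k + holding e k)"
  using jchain_Suc_eq[of e k] unfolding jump_time_def[of e "Suc k"] by (simp split: if_splits)

lemma jump_site_Suc:
  "jump_site e (Suc k) =
     (if jump_time e k = \<infinity> \<or> holding e k = \<infinity> then jump_site e k
      else target n a v (jump_site e k) (jump_level e k) (e k))"
  using jchain_Suc_eq[of e k] unfolding jump_site_def[of e "Suc k"] by (simp split: if_splits)

lemma jump_level_Suc:
  "jump_level e (Suc k) =
     (if jump_time e k = \<infinity> \<or> holding e k = \<infinity> then jump_level e k
      else jump_level e k + v (jump_site e k) * real_of_ereal (holding e k))"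
  using jchain_Suc_eq[of e k] unfolding jump_level_def[of e "Suc k"] by (simp split: if_splits)

lemma jump_time_0: "jump_time e 0 = 0"
  by (simp add: jump_time_def)

lemma jump_time_mono: "k \<le> k' \<Longrightarrow> jump_time e k \<le> jump_time e k'"
  unfolding jump_time_def by (rule jchain_time_mono)

lemma borel_measurable_hold:
  assumes x: "x \<in> measurable M (count_space UNIV)" and [measurable]: "y \<in> borel_measurable M"
    and [measurable]: "\<And>j. (\<lambda>\<omega>. e \<omega> j) \<in> borel_measurable M"
  shows "(\<lambda>\<omega>. hold n a v (x \<omega>) (y \<omega>) (e \<omega>)) \<in> borel_measurable M"
proof -
  have "(\<lambda>\<omega>. hold n a v i (y \<omega>) (e \<omega>)) \<in> borel_measurable M" for i
    unfolding hold_def clock_nl_rate by (intro borel_measurable_Min borel_measurable_clock_ramp) auto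
  then show ?thesis by (rule measurable_compose_countable[OF _ x])
qed

lemma measurable_target:
  assumes x: "x \<in> measurable M (count_space UNIV)" and [measurable]: "y \<in> borel_measurable M"
    and [measurable]: "\<And>j. (\<lambda>\<omega>. e \<omega> j) \<in> borel_measurable M"
  shows "(\<lambda>\<omega>. target n a v (x \<omega>) (y \<omega>) (e \<omega>)) \<in> measurable M (count_space UNIV)"
proof -
  have "(\<lambda>\<omega>. target n a v i (y \<omega>) (e \<omega>)) \<in> measurable M (count_space UNIV)" for i
  proof -
    have [measurable]: "(\<lambda>\<omega>. clock (a i j) (y \<omega>) (v i) (e \<omega> j)) \<in> borel_measurable M" for j
      unfolding clock_nl_rate by (intro borel_measurable_clock_ramp) measurable
    have [measurable]: "(\<lambda>\<omega>. hold n a v i (y \<omega>) (e \<omega>)) \<in> borel_measurable M"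
      by (rule borel_measurable_hold) measurable
    show ?thesis unfolding target_def by measurable
  qed
  then show ?thesis by (rule measurable_compose_countable[OF _ x])
qed

lemma measurable_jchain:
  assumes [measurable]: "\<And>k j. (\<lambda>\<omega>. e \<omega> k j) \<in> borel_measurable M"
  shows "(\<lambda>\<omega>. jump_time (e \<omega>) k) \<in> borel_measurable M
     \<and> (\<lambda>\<omega>. jump_site (e \<omega>) k) \<in> measurable M (count_space UNIV)
     \<and> (\<lambda>\<omega>. jump_level (e \<omega>) k) \<in> borel_measurable M"
proof (induction k)
  case 0 then show ?case by (simp add: jump_time_def jump_site_def jump_level_def)
next
  case (Suc k)
  then have [measurable]: "(\<lambda>\<omega>. jump_time (e \<omega>) k) \<in> borel_measurable M"
    "(\<lambda>\<omega>. jump_site (e \<omega>) k) \<in> measurable M (count_space UNIV)"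
    "(\<lambda>\<omega>. jump_level (e \<omega>) k) \<in> borel_measurable M" by auto
  have [measurable]: "(\<lambda>\<omega>. holding (e \<omega>) k) \<in> borel_measurable M"
    unfolding holding_def by (rule borel_measurable_hold) measurable
  have [measurable]: "(\<lambda>\<omega>. target n a v (jump_site (e \<omega>) k) (jump_level (e \<omega>) k) (e \<omega> k))
      \<in> measurable M (count_space UNIV)"
    by (rule measurable_target) measurable
  have [measurable]: "(\<lambda>\<omega>. v (jump_site (e \<omega>) k)) \<in> borel_measurable M"
    by measurable
  show ?case unfolding jump_time_Suc jump_site_Suc jump_level_Suc by measurable
qed

definition piece :: "(nat \<Rightarrow> nat \<Rightarrow> real) \<Rightarrow> real \<Rightarrow> nat" where
  "piece e t = (LEAST k. ereal t < jump_time e (Suc k))"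

definition explosion_time :: "(nat \<Rightarrow> nat \<Rightarrow> real) \<Rightarrow> real" where
  "explosion_time e = real_of_ereal (SUP k. jump_time e k)"

lemma path_eq_piece:
  "path n a v N0 l e t =
     (jump_site e (piece e t),
      jump_level e (piece e t) + v (jump_site e (piece e t)) * (t - real_of_ereal (jump_time e (piece e t))))"
  by (simp add: path_def Let_def jump_time_def jump_site_def jump_level_def piece_def split: prod.split)

lemma piece_props:
  assumes "ereal t < jump_time e (Suc k0)"
  shows "ereal t < jump_time e (Suc (piece e t))" "\<And>j. j < piece e t \<Longrightarrow> jump_time e (Suc j) \<le> ereal t"
proof -
  show "ereal t < jump_time e (Suc (piece e t))"
    unfolding piece_def by (rule LeastI[of "\<lambda>k. ereal t < jump_time e (Suc k)", OF assms])
  fix j assume "j < piece e t"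
  then have "\<not> ereal t < jump_time e (Suc j)" unfolding piece_def by (rule not_less_Least)
  then show "jump_time e (Suc j) \<le> ereal t" by (simp add: not_less)
qed

lemma piece_eqI:
  assumes "ereal s < jump_time e (Suc k)" "\<And>j. j < k \<Longrightarrow> jump_time e (Suc j) \<le> ereal s"
  shows "piece e s = k"
  unfolding piece_def
proof (rule Least_equality)
  fix j assume "ereal s < jump_time e (Suc j)"
  then show "k \<le> j" using assms(2) by (meson leD not_le_imp_less)
qed (rule assms(1))

lemma piece_beyond_explosion:
  assumes "\<forall>k. \<not> ereal s < jump_time e (Suc k)" "\<forall>k. \<not> ereal t < jump_time e (Suc k)"
  shows "piece e s = piece e t"
proof -
  have "(\<lambda>k. ereal s < jump_time e (Suc k)) = (\<lambda>k. ereal t < jump_time e (Suc k))" using assms by auto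
  then show ?thesis unfolding piece_def by simp
qed

lemma explosion_time_props:
  assumes "\<forall>k. \<not> ereal t < jump_time e (Suc k)"
  shows "explosion_time e \<le> t" "\<And>k. jump_time e k \<le> ereal (explosion_time e)"
proof -
  have le: "jump_time e k \<le> ereal t" for k
  proof -
    have "jump_time e (Suc k) \<le> ereal t" using assms by (simp add: not_less)
    then show ?thesis using jump_time_mono[of k "Suc k" e] by simp
  qed
  have S1: "(SUP k. jump_time e k) \<le> ereal t" by (rule SUP_least) (rule le)
  have S0: "0 \<le> (SUP k. jump_time e k)" using SUP_upper[of 0 UNIV "jump_time e"] jump_time_0 by simp
  obtain s where s: "(SUP k. jump_time e k) = ereal s" using S0 S1 by (cases "(SUP k. jump_time e k)") auto
  then have eq: "(SUP k. jump_time e k) = ereal (explosion_time e)" by (simp add: explosion_time_def)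
  show "explosion_time e \<le> t" using S1 eq by simp
  fix k show "jump_time e k \<le> ereal (explosion_time e)" using SUP_upper[of k UNIV "jump_time e"] eq by simp
qed

lemma piece_right_rat:
  assumes "ereal t < b"
  obtains r :: rat where "t < real_of_rat r" "ereal (real_of_rat r) < b" "piece e (real_of_rat r) = piece e t"
proof (cases "\<exists>k0. ereal t < jump_time e (Suc k0)")
  case True
  then obtain k0 where k0: "ereal t < jump_time e (Suc k0)" by blast
  have "ereal t < min (jump_time e (Suc (piece e t))) b"
    using piece_props(1)[OF k0] assms by simp
  then obtain r :: rat where r: "t < real_of_rat r" "ereal (real_of_rat r) < min (jump_time e (Suc (piece e t))) b"
    by (rule ereal_rat_between)
  have "piece e (real_of_rat r) = piece e t"
  proof (rule piece_eqI)
    fix j assume "j < piece e t"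
    with piece_props(2)[OF k0] r(1) show "jump_time e (Suc j) \<le> ereal (real_of_rat r)"
      by (meson ereal_less_eq(3) less_imp_le order_trans)
  qed (use r in simp)
  with r show thesis by (intro that) auto
next
  case False
  obtain r :: rat where r: "t < real_of_rat r" "ereal (real_of_rat r) < b"
    using assms by (rule ereal_rat_between)
  have "ereal t < ereal (real_of_rat r)" using r(1) by simp
  then have "\<forall>k. \<not> ereal (real_of_rat r) < jump_time e (Suc k)"
    using False by (meson less_trans)
  with False r show thesis by (intro that) (auto intro: piece_beyond_explosion)
qed

text \<open>Countably many probe times (rationals, jump times, the explosion time) suffice to
  detect the hitting events that define \<open>revT\<close> and \<open>exitT\<close>.\<close>

definition probe_time :: "(nat \<Rightarrow> nat \<Rightarrow> real) \<Rightarrow> rat + nat option \<Rightarrow> real" where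
  "probe_time e i = (case i of Inl r \<Rightarrow> real_of_rat r | Inr None \<Rightarrow> explosion_time e
     | Inr (Some k) \<Rightarrow> real_of_ereal (jump_time e k))"

lemma piece_start_between:
  assumes k0: "ereal t < jump_time e (Suc k0)" and lo_t: "lo \<le> t" and neq: "piece e lo \<noteq> piece e t"
  obtains k p where "jump_time e k = ereal p" "lo < p" "p \<le> t" "piece e p = piece e t"
proof -
  define k where "k = piece e t"
  have hi: "ereal t < jump_time e (Suc k)" and below: "\<And>j. j < k \<Longrightarrow> jump_time e (Suc j) \<le> ereal t"
    using piece_props[OF k0] by (simp_all add: k_def)
  have "0 < k \<and> ereal lo < jump_time e k"
  proof (rule ccontr)
    assume "\<not> (0 < k \<and> ereal lo < jump_time e k)"
    then have h: "k = 0 \<or> jump_time e k \<le> ereal lo" by auto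
    have "piece e lo = k"
    proof (rule piece_eqI)
      show "ereal lo < jump_time e (Suc k)" using lo_t hi by (metis ereal_less_eq(3) order.strict_trans1)
      fix j assume "j < k"
      then have "jump_time e (Suc j) \<le> jump_time e k" "k \<noteq> 0" by (auto intro: jump_time_mono)
      then show "jump_time e (Suc j) \<le> ereal lo" using h by (metis order_trans)
    qed
    then show False using neq k_def by simp
  qed
  then obtain j0 where j0: "k = Suc j0" and lo_k: "ereal lo < jump_time e k" by (cases k) auto
  have k_t: "jump_time e k \<le> ereal t" using below[of j0] j0 by simp
  then obtain p where p: "jump_time e k = ereal p" using lo_k by (cases "jump_time e k") auto
  have "piece e p = k"
  proof (rule piece_eqI)
    show "ereal p < jump_time e (Suc k)" using p k_t hi by (metis order.strict_trans1)
    fix j assume "j < k"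
    then show "jump_time e (Suc j) \<le> ereal p" using p jump_time_mono[of "Suc j" k e] by simp
  qed
  with p lo_k k_t show thesis by (intro that[of k p]) (auto simp: k_def)
qed

lemma piece_left_probe:
  assumes lo_t: "lo \<le> t"
  obtains s where "s = lo \<or> (\<exists>i. s = probe_time e i)" "lo \<le> s" "s \<le> t" "piece e s = piece e t"
proof (cases "piece e lo = piece e t")
  case True
  with lo_t show thesis by (intro that[of lo]) auto
next
  case neq: False
  show thesis
  proof (cases "\<exists>k0. ereal t < jump_time e (Suc k0)")
    case True
    then obtain k0 where "ereal t < jump_time e (Suc k0)" by blast
    then obtain k p where "jump_time e k = ereal p" "lo < p" "p \<le> t" "piece e p = piece e t"
      using lo_t neq by (rule piece_start_between)
    moreover have "p = probe_time e (Inr (Some k))"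
      using \<open>jump_time e k = ereal p\<close> by (simp add: probe_time_def)
    ultimately show thesis by (intro that[of p]) auto
  next
    case False
    then have none: "\<forall>k. \<not> ereal t < jump_time e (Suc k)" by blast
    note S = explosion_time_props[OF none]
    obtain j where "ereal lo < jump_time e (Suc j)"
      using neq piece_beyond_explosion[OF _ none, of lo] by blast
    then have "ereal lo < ereal (explosion_time e)" using S(2)[of "Suc j"] by (rule less_le_trans)
    moreover have "\<forall>k. \<not> ereal (explosion_time e) < jump_time e (Suc k)" using S(2) by (simp add: not_less)
    moreover have "explosion_time e = probe_time e (Inr None)" by (simp add: probe_time_def)
    ultimately show thesis
      using piece_beyond_explosion[OF _ none] S(1) by (intro that[of "explosion_time e"]) auto
  qed
qed

lemma rev_hit_probe:
  assumes t: "0 \<le> t" "ereal t < b" and hit: "0 \<le> snd (path n a v N0 l e t)"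
  shows "\<exists>i. 0 \<le> probe_time e i \<and> ereal (probe_time e i) < b \<and> 0 \<le> snd (path n a v N0 l e (probe_time e i))"
proof -
  obtain s where s: "s = 0 \<or> (\<exists>i. s = probe_time e i)" "0 \<le> s" "s \<le> t" "piece e s = piece e t"
    using t(1) by (rule piece_left_probe)
  obtain r :: rat where r: "t < real_of_rat r" "ereal (real_of_rat r) < b" "piece e (real_of_rat r) = piece e t"
    using t(2) by (rule piece_right_rat)
  define k where "k = piece e t"
  define w where "w = v (jump_site e k)"
  have level: "snd (path n a v N0 l e u) = snd (path n a v N0 l e t) + w * (u - t)"
    if "piece e u = k" for u
    using that by (simp add: path_eq_piece w_def k_def algebra_simps)
  have s_probe: "\<exists>i. s = probe_time e i"
    using s(1) jump_time_0[of e] by (auto simp: probe_time_def intro: exI[of _ "Inr (Some 0)"])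
  \<comment> \<open>the memory is affine on a piece: if it does not increase, move to the left end \<open>s\<close>,
    otherwise to the rational \<open>r\<close> to the right of \<open>t\<close>\<close>
  show ?thesis
  proof (cases "w \<le> 0")
    case True
    have "0 \<le> snd (path n a v N0 l e s)"
      using level[of s] s True hit by (simp add: k_def mult_nonpos_nonpos)
    moreover have "ereal s < b" using s(3) t(2) by (metis ereal_less_eq(3) order.strict_trans1)
    ultimately show ?thesis using s_probe s(2) by auto
  next
    case False
    have "0 \<le> snd (path n a v N0 l e (real_of_rat r))"
      using level[of "real_of_rat r"] r False hit by (simp add: k_def)
    moreover have "0 \<le> real_of_rat r" using r(1) t(1) by linarith
    ultimately show ?thesis using r by (intro exI[of _ "Inl r"]) (simp add: probe_time_def)
  qed
qed

lemma exit_hit_probe: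
  assumes "lo \<le> t" "ereal t < b" and hit: "fst (path n a v N0 l e t) \<notin> B"
  shows "(ereal lo < b \<and> fst (path n a v N0 l e lo) \<notin> B)
    \<or> (\<exists>i. lo \<le> probe_time e i \<and> ereal (probe_time e i) < b \<and> fst (path n a v N0 l e (probe_time e i)) \<notin> B)"
proof -
  obtain s where s: "s = lo \<or> (\<exists>i. s = probe_time e i)" "lo \<le> s" "s \<le> t" "piece e s = piece e t"
    using assms(1) by (rule piece_left_probe)
  then have "fst (path n a v N0 l e s) \<notin> B" "ereal s < b"
    using hit assms(2) by (simp_all add: path_eq_piece) (metis ereal_less_eq(3) order.strict_trans1)
  then show ?thesis using s by auto
qed

context
  fixes M :: "'m measure" and E :: "'m \<Rightarrow> nat \<Rightarrow> nat \<Rightarrow> real"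
  assumes [measurable]: "\<And>k j. (\<lambda>\<omega>. E \<omega> k j) \<in> borel_measurable M"
begin

lemma borel_measurable_jump_time [measurable]: "(\<lambda>\<omega>. jump_time (E \<omega>) k) \<in> borel_measurable M"
  and measurable_jump_site [measurable]: "(\<lambda>\<omega>. jump_site (E \<omega>) k) \<in> measurable M (count_space UNIV)"
  and borel_measurable_jump_level [measurable]: "(\<lambda>\<omega>. jump_level (E \<omega>) k) \<in> borel_measurable M"
  using measurable_jchain[of E M k] by simp_all

lemma borel_measurable_probe_time [measurable]: "(\<lambda>\<omega>. probe_time (E \<omega>) i) \<in> borel_measurable M"
proof -
  consider r where "i = Inl r" | "i = Inr None" | k where "i = Inr (Some k)"
    by (metis option.exhaust sum.exhaust)
  then show ?thesis
  proof cases
    case 2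
    then show ?thesis unfolding probe_time_def explosion_time_def by simp measurable
  next
    case 3
    then show ?thesis unfolding probe_time_def by simp measurable
  qed (simp add: probe_time_def)
qed

lemma measurable_path:
  assumes [measurable]: "t \<in> borel_measurable M"
  shows "(\<lambda>\<omega>. fst (path n a v N0 l (E \<omega>) (t \<omega>))) \<in> measurable M (count_space UNIV)"
    and "(\<lambda>\<omega>. snd (path n a v N0 l (E \<omega>) (t \<omega>))) \<in> borel_measurable M"
proof -
  have piece: "(\<lambda>\<omega>. piece (E \<omega>) (t \<omega>)) \<in> measurable M (count_space UNIV)"
    unfolding piece_def by measurable
  have [measurable]: "(\<lambda>\<omega>. v (jump_site (E \<omega>) i)) \<in> borel_measurable M" for i by measurable
  show "(\<lambda>\<omega>. fst (path n a v N0 l (E \<omega>) (t \<omega>))) \<in> measurable M (count_space UNIV)"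
    unfolding path_eq_piece fst_conv by (rule measurable_compose_countable[OF _ piece]) measurable
  show "(\<lambda>\<omega>. snd (path n a v N0 l (E \<omega>) (t \<omega>))) \<in> borel_measurable M"
    unfolding path_eq_piece snd_conv
    by (rule measurable_compose_countable[OF _ piece, where f="\<lambda>i \<omega>. jump_level (E \<omega>) i
          + v (jump_site (E \<omega>) i) * (t \<omega> - real_of_ereal (jump_time (E \<omega>) i))"]) measurable
qed

lemma borel_measurable_revT [measurable]: "(\<lambda>\<omega>. revT n a v N0 l (E \<omega>)) \<in> borel_measurable M"
proof -
  have [measurable]: "Measurable.pred M (\<lambda>\<omega>. 0 \<le> snd (path n a v N0 l (E \<omega>) (t \<omega>)))"
    if [measurable]: "t \<in> borel_measurable M" for t
    using measurable_path(2)[OF that] by measurable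
  have "(\<lambda>\<omega>. Inf {t. (\<lambda>_. 0) \<omega> \<le> t \<and> 0 \<le> snd (path n a v N0 l (E \<omega>) t)}) \<in> borel_measurable M"
    by (rule borel_measurable_Inf_hit[where c="\<lambda>i \<omega>. probe_time (E \<omega>) i"]) (use rev_hit_probe in auto)
  then show ?thesis by (simp add: revT_def)
qed

lemma borel_measurable_path_exitT:
  "(\<lambda>\<omega>. snd (path n a v N0 l (E \<omega>) (exitT n a v N0 l {..N0} (E \<omega>)))) \<in> borel_measurable M"
proof -
  have [measurable]: "Measurable.pred M (\<lambda>\<omega>. fst (path n a v N0 l (E \<omega>) (t \<omega>)) \<notin> {..N0})"
    if [measurable]: "t \<in> borel_measurable M" for t
    using measurable_compose[OF measurable_path(1)[OF that], of "\<lambda>x. x \<notin> {..N0}"]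
    by (simp add: Measurable.pred_def comp_def)
  have "(\<lambda>\<omega>. Inf {t. revT n a v N0 l (E \<omega>) \<le> t \<and> fst (path n a v N0 l (E \<omega>) t) \<notin> {..N0}})
      \<in> borel_measurable M"
  proof (rule borel_measurable_Inf_hit[where c="\<lambda>i \<omega>. probe_time (E \<omega>) i"])
    fix \<omega> t b
    assume "revT n a v N0 l (E \<omega>) \<le> t" "ereal t < b" "fst (path n a v N0 l (E \<omega>) t) \<notin> {..N0}"
    then show "(ereal (revT n a v N0 l (E \<omega>)) < b
          \<and> fst (path n a v N0 l (E \<omega>) (revT n a v N0 l (E \<omega>))) \<notin> {..N0})
        \<or> (\<exists>i. revT n a v N0 l (E \<omega>) \<le> probe_time (E \<omega>) i \<and> ereal (probe_time (E \<omega>) i) < b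
          \<and> fst (path n a v N0 l (E \<omega>) (probe_time (E \<omega>) i)) \<notin> {..N0})"
      by (rule exit_hit_probe)
  qed measurable
  then have [measurable]: "(\<lambda>\<omega>. exitT n a v N0 l {..N0} (E \<omega>)) \<in> borel_measurable M"
    by (simp add: exitT_def)
  show ?thesis by (rule measurable_path(2)) measurable
qed

lemma measurable_path_revT:
  "(\<lambda>\<omega>. fst (path n a v N0 l (E \<omega>) (revT n a v N0 l (E \<omega>)))) \<in> measurable M (count_space UNIV)"
  by (rule measurable_path(1)) measurable

end

section \<open>Law of the memory at exit\<close>

definition desc_idx :: "nat \<Rightarrow> (nat \<times> nat) set" where
  "desc_idx d = (\<lambda>k. (k, N0-k-1)) ` {..d}"

lemma desc_level_cong:
  assumes "\<And>k. k < d \<Longrightarrow> e k (N0-k-1) = e' k (N0-k-1)"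
  shows "k \<le> d \<Longrightarrow> desc_level e k = desc_level e' k"
proof (induction k)
  case (Suc k) then show ?case using assms[of k] by simp
qed simp

lemma n_desc_eq_cong:
  assumes "\<And>k. k \<le> d \<Longrightarrow> e k (N0-k-1) = e' k (N0-k-1)"
  shows "n_desc e = d \<longleftrightarrow> n_desc e' = d"
proof -
  have "desc_level e k = desc_level e' k" if "k \<le> d" for k
    by (rule desc_level_cong[OF _ that]) (use assms in auto)
  then have "descends e k \<longleftrightarrow> descends e' k" if "k \<le> d" for k
    unfolding descends_def using that assms[OF that] by simp
  then show ?thesis unfolding n_desc_eq_iff by auto
qed

lemma borel_measurable_desc_level:
  "k \<le> d \<Longrightarrow> (\<lambda>u. desc_level (\<lambda>k j. u (k,j)) k) \<in> borel_measurable (\<Pi>\<^sub>M i\<in>desc_idx d. borel)"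
proof (induction k)
  case (Suc k)
  then have [measurable]: "(\<lambda>u. desc_level (\<lambda>k j. u (k,j)) k) \<in> borel_measurable (\<Pi>\<^sub>M i\<in>desc_idx d. borel)"
    by simp
  have "(k, N0-k-1) \<in> desc_idx d" using Suc.prems by (auto simp: desc_idx_def)
  then have [measurable]: "(\<lambda>u. u (k, N0-k-1)) \<in> borel_measurable (\<Pi>\<^sub>M i\<in>desc_idx d. borel)"
    by (rule measurable_component_singleton)
  show ?case unfolding desc_level.simps by measurable
qed simp

lemma measurable_descends:
  assumes "k \<le> d"
  shows "Measurable.pred (\<Pi>\<^sub>M i\<in>desc_idx d. borel) (\<lambda>u. descends (\<lambda>k j. u (k,j)) k)"
proof -
  define P where "P = (\<Pi>\<^sub>M i\<in>desc_idx d. borel :: real measure)"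
  have y: "(\<lambda>u. desc_level (\<lambda>k j. u (k,j)) k) \<in> borel_measurable P"
    using borel_measurable_desc_level assms by (simp add: P_def)
  have "(k, N0-k-1) \<in> desc_idx d" using assms by (auto simp: desc_idx_def)
  then have u: "(\<lambda>u. u (k, N0-k-1)) \<in> borel_measurable P"
    unfolding P_def by (rule measurable_component_singleton)
  have bound: "(\<lambda>u. c (N0-k-1) * (desc_level (\<lambda>k j. u (k,j)) k)^2 / (2 * v (N0-k))) \<in> borel_measurable P"
    using y by simp
  have "{u \<in> space P. descends (\<lambda>k j. u (k,j)) k}
      = (if k < N0 then {u \<in> space P. desc_level (\<lambda>k j. u (k,j)) k < 0} \<inter>
          {u \<in> space P. u (k, N0-k-1) \<le> c (N0-k-1) * (desc_level (\<lambda>k j. u (k,j)) k)^2 / (2 * v (N0-k))}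
         else {})"
    by (auto simp: descends_def)
  also have "\<dots> \<in> sets P"
    using borel_measurable_less[OF y borel_measurable_const] borel_measurable_le[OF u bound] by auto
  finally show ?thesis by (simp add: P_def Measurable.pred_def)
qed

definition desc_event :: "nat \<Rightarrow> (nat \<times> nat \<Rightarrow> real) set" where
  "desc_event d = {u \<in> space (\<Pi>\<^sub>M i\<in>desc_idx d. borel). n_desc (\<lambda>k j. u (k,j)) = d}"

lemma sets_desc_event: "desc_event d \<in> sets (\<Pi>\<^sub>M i\<in>desc_idx d. borel)"
proof -
  have before: "Measurable.pred (\<Pi>\<^sub>M i\<in>desc_idx d. borel) (\<lambda>u. \<forall>k\<in>{..<d}. descends (\<lambda>k j. u (k,j)) k)"
    by (rule pred_intros_countable_bounded(3)) (rule measurable_descends, simp)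
  have stop: "Measurable.pred (\<Pi>\<^sub>M i\<in>desc_idx d. borel) (\<lambda>u. \<not> descends (\<lambda>k j. u (k,j)) d)"
    using measurable_descends[of d d] unfolding Measurable.pred_def by (simp add: sets.sets_Collect_neg)
  have "desc_event d =
      {u \<in> space (\<Pi>\<^sub>M i\<in>desc_idx d. borel). \<forall>k\<in>{..<d}. descends (\<lambda>k j. u (k,j)) k} \<inter>
      {u \<in> space (\<Pi>\<^sub>M i\<in>desc_idx d. borel). \<not> descends (\<lambda>k j. u (k,j)) d}"
    unfolding desc_event_def n_desc_eq_iff by auto
  also have "\<dots> \<in> sets (\<Pi>\<^sub>M i\<in>desc_idx d. borel)"
    using before stop unfolding Measurable.pred_def by (rule sets.Int)
  finally show ?thesis .
qed

definition exit_level :: "nat \<Rightarrow> (nat \<Rightarrow> real) \<Rightarrow> real" where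
  "exit_level g w = sqrt (2 * (\<Sum>j\<in>{g..N0}. lam n N0 N1 v j * w j))"

lemma exit_level_restrict: "exit_level g (\<lambda>j\<in>{g..N0}. w j) = exit_level g w"
  unfolding exit_level_def by (intro arg_cong[where f=sqrt] arg_cong[where f="\<lambda>x. 2 * x"] sum.cong) auto

lemma borel_measurable_exit_level: "exit_level g \<in> borel_measurable (\<Pi>\<^sub>M j\<in>{g..N0}. borel)"
  unfolding exit_level_def[abs_def] by (rule borel_measurable_sqrt_weighted_sum)

definition exit_level_prob :: "nat \<Rightarrow> real set \<Rightarrow> real" where
  "exit_level_prob g A =
     measure (\<Pi>\<^sub>M j\<in>{g..N0}. exp_law) (exit_level g -` A \<inter> space (\<Pi>\<^sub>M j\<in>{g..N0}. borel))"

lemma asc_level_eq_exit_level: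
  assumes "n_desc e = d"
  shows "asc_level e d = exit_level (N0 - d) (\<lambda>j. e (d + j - (N0 - d)) (Suc j))"
proof -
  have d: "d \<le> N0" using n_desc_le assms by metis
  have "(\<Sum>j\<in>{N0 - d..N0}. lam n N0 N1 v j * e (d + j - (N0 - d)) (Suc j))
      = (\<Sum>j\<in>{0 + (N0 - d)..d + (N0 - d)}. lam n N0 N1 v j * e (d + j - (N0 - d)) (Suc j))"
    using d by simp
  also have "\<dots> = (\<Sum>m\<in>{0..d}. lam n N0 N1 v (m + (N0 - d)) * e (d + (m + (N0 - d)) - (N0 - d)) (Suc (m + (N0 - d))))"
    by (rule sum.shift_bounds_cl_nat_ivl)
  also have "\<dots> = (\<Sum>m\<le>d. lam n N0 N1 v (rev_site e + m) * e (n_desc e + m) (rev_site e + m + 1))"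
    using assms by (intro sum.cong) (auto simp: add.commute atMost_atLeast0 rev_site_def)
  finally show ?thesis using assms by (simp add: asc_level_def asc_level_sq_def exit_level_def)
qed

end

locale noiseless_prob = noiseless n N0 N1 v l for n N0 N1 v l +
  fixes M :: "'a measure" and E :: "nat \<Rightarrow> nat \<Rightarrow> 'a \<Rightarrow> real"
  assumes prob_space_M: "prob_space M"
    and E_indep: "prob_space.indep_vars M (\<lambda>_. borel) (\<lambda>(k, j). E k j) UNIV"
    and E_exp: "\<And>k j. distributed M lborel (E k j) (exponential_density 1)"
begin

sublocale PM: prob_space M by (rule prob_space_M)

abbreviation sample :: "'a \<Rightarrow> nat \<Rightarrow> nat \<Rightarrow> real" where "sample \<omega> \<equiv> (\<lambda>k j. E k j \<omega>)"

lemma borel_measurable_E [measurable]: "E k j \<in> borel_measurable M"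
  using distributed_measurable[OF E_exp[of k j]] by simp

lemma AE_sample_pos: "AE \<omega> in M. \<forall>k j. 0 < E k j \<omega>"
proof -
  have "AE \<omega> in M. 0 < E k j \<omega>" for k j
  proof -
    have "PM.prob {\<omega> \<in> space M. 0 < E k j \<omega>} = 1"
      using PM.exponential_distributedD_gt[OF E_exp[of k j], of 0] by simp
    then have "AE \<omega> in M. \<omega> \<in> {\<omega> \<in> space M. 0 < E k j \<omega>}" by (rule PM.AE_prob_1)
    then show ?thesis by eventually_elim auto
  qed
  then show ?thesis by (simp add: AE_all_countable)
qed

text \<open>On \<open>{n_desc = d}\<close> the descent reads the variables indexed by \<open>desc_idx d\<close> and
  the ascent from site \<open>j\<close> reads the one indexed by \<open>asc_map d j\<close>; the two index sets are
  disjoint, which makes the exit level independent of the event \<open>{n_desc = d}\<close>.\<close>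

definition asc_map :: "nat \<Rightarrow> nat \<Rightarrow> nat \<times> nat" where
  "asc_map d j = (d + j - (N0 - d), Suc j)"

definition desc_vars :: "nat \<Rightarrow> 'a \<Rightarrow> nat \<times> nat \<Rightarrow> real" where
  "desc_vars d \<omega> = (\<lambda>i\<in>desc_idx d. case_prod E i \<omega>)"

definition asc_vars :: "nat \<Rightarrow> 'a \<Rightarrow> nat \<times> nat \<Rightarrow> real" where
  "asc_vars d \<omega> = (\<lambda>i\<in>asc_map d ` {N0 - d..N0}. case_prod E i \<omega>)"

lemma indep_desc_asc_vars:
  assumes "d \<le> N0"
  shows "PM.indep_var (\<Pi>\<^sub>M i\<in>desc_idx d. borel) (desc_vars d)
    (\<Pi>\<^sub>M i\<in>asc_map d ` {N0 - d..N0}. borel) (asc_vars d)"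
proof -
  have "desc_idx d \<inter> asc_map d ` {N0 - d..N0} = {}"
    using assms by (auto simp: desc_idx_def asc_map_def)
  then show ?thesis
    unfolding desc_vars_def asc_vars_def by (rule PM.indep_var_restrict[OF E_indep]) auto
qed

lemma measurable_desc_vars: "desc_vars d \<in> measurable M (\<Pi>\<^sub>M i\<in>desc_idx d. borel)"
  unfolding desc_vars_def by (rule measurable_restrict) (auto split: prod.split)

lemma measurable_asc_vars: "asc_vars d \<in> measurable M (\<Pi>\<^sub>M i\<in>asc_map d ` {N0 - d..N0}. borel)"
  unfolding asc_vars_def by (rule measurable_restrict) (auto split: prod.split)

lemma distr_asc_vars:
  "distr M (\<Pi>\<^sub>M i\<in>asc_map d ` {N0 - d..N0}. borel) (asc_vars d) = (\<Pi>\<^sub>M i\<in>asc_map d ` {N0 - d..N0}. exp_law)"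
  unfolding asc_vars_def
proof (rule PM.distr_restrict_indep_vars)
  show "PM.indep_vars (\<lambda>_. borel) (case_prod E) (asc_map d ` {N0 - d..N0})"
    by (rule PM.indep_vars_subset[OF E_indep]) auto
qed (auto simp: distr_borel_exponential[OF E_exp])

lemma desc_vars_in_desc_event_iff:
  assumes "\<omega> \<in> space M"
  shows "desc_vars d \<omega> \<in> desc_event d \<longleftrightarrow> n_desc (sample \<omega>) = d"
proof -
  have "n_desc (\<lambda>k j. desc_vars d \<omega> (k,j)) = d \<longleftrightarrow> n_desc (sample \<omega>) = d"
    by (rule n_desc_eq_cong) (auto simp: desc_vars_def desc_idx_def)
  then show ?thesis
    using measurable_space[OF measurable_desc_vars assms] by (simp add: desc_event_def)
qed

lemma sets_n_desc_eq: "{\<omega> \<in> space M. n_desc (sample \<omega>) = d} \<in> sets M"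
proof -
  have "{\<omega> \<in> space M. n_desc (sample \<omega>) = d} = desc_vars d -` desc_event d \<inter> space M"
    using desc_vars_in_desc_event_iff by auto
  also have "\<dots> \<in> sets M" using measurable_desc_vars sets_desc_event by (rule measurable_sets)
  finally show ?thesis .
qed

definition asc_exit_level :: "nat \<Rightarrow> 'a \<Rightarrow> real" where
  "asc_exit_level d \<omega> = exit_level (N0 - d) (\<lambda>j. asc_vars d \<omega> (asc_map d j))"

lemma borel_measurable_exit_level_asc_map:
  "(\<lambda>u. exit_level (N0 - d) (\<lambda>j\<in>{N0 - d..N0}. u (asc_map d j)))
     \<in> borel_measurable (\<Pi>\<^sub>M i\<in>asc_map d ` {N0 - d..N0}. borel)"
  by (intro measurable_compose[OF _ borel_measurable_exit_level] measurable_restrict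
      measurable_component_singleton) auto

lemma borel_measurable_asc_exit_level: "asc_exit_level d \<in> borel_measurable M"
  using measurable_compose[OF measurable_asc_vars borel_measurable_exit_level_asc_map]
  by (simp add: asc_exit_level_def[abs_def] exit_level_restrict comp_def)

lemma prob_n_desc_asc_exit_level:
  assumes d: "d \<le> N0" and A: "A \<in> sets borel"
  shows "PM.prob {\<omega> \<in> space M. n_desc (sample \<omega>) = d \<and> asc_exit_level d \<omega> \<in> A}
       = PM.prob {\<omega> \<in> space M. n_desc (sample \<omega>) = d} * exit_level_prob (N0 - d) A"
proof -
  define \<psi> where "\<psi> u = exit_level (N0 - d) (\<lambda>j\<in>{N0 - d..N0}. u (asc_map d j))" for u
  have \<psi>: "\<psi> \<in> borel_measurable (\<Pi>\<^sub>M i\<in>asc_map d ` {N0 - d..N0}. borel)"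
    unfolding \<psi>_def[abs_def] by (rule borel_measurable_exit_level_asc_map)
  have inj: "inj_on (asc_map d) {N0 - d..N0}" by (auto simp: inj_on_def asc_map_def)
  have "PM.prob {\<omega> \<in> space M. desc_vars d \<omega> \<in> desc_event d \<and> \<psi> (asc_vars d \<omega>) \<in> A}
     = PM.prob {\<omega> \<in> space M. desc_vars d \<omega> \<in> desc_event d}
       * measure (\<Pi>\<^sub>M i\<in>asc_map d ` {N0 - d..N0}. exp_law)
           (\<psi> -` A \<inter> space (\<Pi>\<^sub>M i\<in>asc_map d ` {N0 - d..N0}. borel))"
    by (rule PM.prob_indep_var_vimage[OF indep_desc_asc_vars[OF d] sets_desc_event distr_asc_vars \<psi> A])
  also have "measure (\<Pi>\<^sub>M i\<in>asc_map d ` {N0 - d..N0}. exp_law)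
           (\<psi> -` A \<inter> space (\<Pi>\<^sub>M i\<in>asc_map d ` {N0 - d..N0}. borel)) = exit_level_prob (N0 - d) A"
    unfolding \<psi>_def exit_level_prob_def
    by (rule measure_PiM_reindex_vimage[OF inj prob_space_exponential_density _ borel_measurable_exit_level A])
       (simp_all add: sets_density)
  finally show ?thesis
    using desc_vars_in_desc_event_iff
    by (simp add: \<psi>_def asc_exit_level_def exit_level_restrict cong: conj_cong)
qed

abbreviation exit_mem :: "'a \<Rightarrow> real" where "exit_mem \<omega> \<equiv>
  snd (path n a v N0 l (sample \<omega>) (exitT n a v N0 l {..N0} (sample \<omega>)))"

abbreviation rev_pos :: "'a \<Rightarrow> nat" where
  "rev_pos \<omega> \<equiv> fst (path n a v N0 l (sample \<omega>) (revT n a v N0 l (sample \<omega>)))"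

lemma exit_mem_eq:
  assumes "\<forall>k j. 0 < E k j \<omega>"
  shows "exit_mem \<omega> = asc_exit_level (n_desc (sample \<omega>)) \<omega>"
proof -
  define d where "d = n_desc (sample \<omega>)"
  have "exit_mem \<omega> = exit_level (N0 - d) (\<lambda>j. E (d + j - (N0 - d)) (Suc j) \<omega>)"
    using path_at_exitT[of "sample \<omega>"] asc_level_eq_exit_level[of "sample \<omega>" d] assms
    by (simp add: d_def)
  also have "\<dots> = asc_exit_level d \<omega>"
    unfolding asc_exit_level_def exit_level_def
    by (intro arg_cong[where f=sqrt] arg_cong[where f="\<lambda>x. 2 * x"] sum.cong)
      (auto simp: asc_vars_def asc_map_def)
  finally show ?thesis by (simp add: d_def)
qed

lemma rev_pos_eq:
  assumes "\<forall>k j. 0 < E k j \<omega>"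
  shows "rev_pos \<omega> = N0 - n_desc (sample \<omega>)"
  using revT_eq_rev_time[of "sample \<omega>"] rev_time_piece(3)[of "sample \<omega>"] assms
  by (simp add: rev_site_def)

lemma prob_exit_mem:
  assumes A: "A \<in> sets borel"
  shows "PM.prob {\<omega> \<in> space M. exit_mem \<omega> \<in> A} =
     (\<Sum>d\<le>N0. PM.prob {\<omega> \<in> space M. n_desc (sample \<omega>) = d} * exit_level_prob (N0 - d) A)"
proof -
  define B where "B d = {\<omega> \<in> space M. n_desc (sample \<omega>) = d \<and> asc_exit_level d \<omega> \<in> A}" for d
  have B: "B d \<in> sets M" for d
  proof -
    have "B d = {\<omega> \<in> space M. n_desc (sample \<omega>) = d} \<inter> (asc_exit_level d -` A \<inter> space M)"
      by (auto simp: B_def)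
    then show ?thesis
      using sets_n_desc_eq measurable_sets[OF borel_measurable_asc_exit_level A] by auto
  qed
  have exit_set: "{\<omega> \<in> space M. exit_mem \<omega> \<in> A} \<in> sets M"
    using measurable_sets[OF borel_measurable_path_exitT[where E=sample and M=M, OF borel_measurable_E] A]
    by (simp add: vimage_def Int_def conj_commute)
  have "PM.prob {\<omega> \<in> space M. exit_mem \<omega> \<in> A} = PM.prob (\<Union>d\<in>{..N0}. B d)"
  proof (rule PM.finite_measure_eq_AE)
    show "AE \<omega> in M. (\<omega> \<in> {\<omega> \<in> space M. exit_mem \<omega> \<in> A}) = (\<omega> \<in> (\<Union>d\<in>{..N0}. B d))"
      using AE_sample_pos
    proof eventually_elim
      case (elim \<omega>)
      then show ?case using exit_mem_eq[OF elim] n_desc_le[of "sample \<omega>"] by (auto simp: B_def)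
    qed
  qed (use B exit_set in auto)
  also have "\<dots> = (\<Sum>d\<le>N0. PM.prob (B d))"
    by (rule PM.finite_measure_finite_Union) (use B in \<open>auto simp: disjoint_family_on_def B_def\<close>)
  also have "\<dots> = (\<Sum>d\<le>N0. PM.prob {\<omega> \<in> space M. n_desc (sample \<omega>) = d} * exit_level_prob (N0 - d) A)"
    unfolding B_def by (intro sum.cong refl prob_n_desc_asc_exit_level A) simp
  finally show ?thesis .
qed

lemma sum_prob_n_desc: "(\<Sum>d\<le>N0. PM.prob {\<omega> \<in> space M. n_desc (sample \<omega>) = d}) = 1"
proof -
  have "(\<Sum>d\<le>N0. PM.prob {\<omega> \<in> space M. n_desc (sample \<omega>) = d})
      = PM.prob (\<Union>d\<in>{..N0}. {\<omega> \<in> space M. n_desc (sample \<omega>) = d})"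
    by (rule PM.finite_measure_finite_Union[symmetric])
      (use sets_n_desc_eq in \<open>auto simp: disjoint_family_on_def\<close>)
  also have "(\<Union>d\<in>{..N0}. {\<omega> \<in> space M. n_desc (sample \<omega>) = d}) = space M"
    using n_desc_le by auto
  finally show ?thesis using PM.prob_space by simp
qed

lemma prob_rev_pos:
  assumes "j \<le> N0"
  shows "PM.prob {\<omega> \<in> space M. rev_pos \<omega> = j} = PM.prob {\<omega> \<in> space M. n_desc (sample \<omega>) = N0 - j}"
proof (rule PM.finite_measure_eq_AE)
  show "AE \<omega> in M. (\<omega> \<in> {\<omega> \<in> space M. rev_pos \<omega> = j}) = (\<omega> \<in> {\<omega> \<in> space M. n_desc (sample \<omega>) = N0 - j})"
    using AE_sample_pos
  proof eventually_elim
    case (elim \<omega>)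
    then show ?case using rev_pos_eq[OF elim] n_desc_le[of "sample \<omega>"] assms by auto
  qed
  show "{\<omega> \<in> space M. rev_pos \<omega> = j} \<in> sets M"
    using measurable_path_revT[where E=sample and M=M, OF borel_measurable_E]
    by (simp add: measurable_count_space_eq2_countable vimage_def Int_def conj_commute)
qed (rule sets_n_desc_eq)

end

locale noiseless_coupling = noiseless_prob n N0 N1 v l M E for n N0 N1 v l and M :: "'a measure" and E +
  fixes N :: "'b measure" and E' :: "nat \<Rightarrow> 'b \<Rightarrow> real" and Z :: "'b \<Rightarrow> real"
  assumes prob_space_N: "prob_space N"
    and E'_exp: "\<And>k. k \<le> N0 \<Longrightarrow> distributed N lborel (E' k) (exponential_density 1)"
    and EZ_indep: "prob_space.indep_vars N (\<lambda>_. borel) (\<lambda>i. if i = Suc N0 then Z else E' i) {..Suc N0}"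
    and Z_law: "\<And>j. j \<le> N0 \<Longrightarrow> measure N {\<omega> \<in> space N. Z \<omega> = real j} =
        measure M {\<omega> \<in> space M. fst (path n (nl_rate n N0 N1 v) v N0 l (\<lambda>k j. E k j \<omega>)
                 (revT n (nl_rate n N0 N1 v) v N0 l (\<lambda>k j. E k j \<omega>))) = j}"
begin

sublocale PN: prob_space N by (rule prob_space_N)

definition coord :: "nat \<Rightarrow> 'b \<Rightarrow> real" where
  "coord i = (if i = Suc N0 then Z else E' i)"

lemma borel_measurable_coord: "i \<le> Suc N0 \<Longrightarrow> coord i \<in> borel_measurable N"
  using EZ_indep unfolding PN.indep_vars_def coord_def by auto

lemma borel_measurable_Z [measurable]: "Z \<in> borel_measurable N"
  using borel_measurable_coord[of "Suc N0"] by (simp add: coord_def)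

definition mixture :: "'b \<Rightarrow> real" where
  "mixture \<omega> = (\<Sum>k\<le>N0. sqrt (2 * (\<Sum>j\<in>{k..N0}. lam n N0 N1 v j * E' j \<omega>))
   * (if Z \<omega> = real k then 1 else 0))"

lemma borel_measurable_mixture: "mixture \<in> borel_measurable N"
proof -
  have [measurable]: "E' j \<in> borel_measurable N" if "j \<le> N0" for j
    using borel_measurable_coord[of j] that by (simp add: coord_def)
  show ?thesis unfolding mixture_def[abs_def] by measurable
qed

lemma mixture_eq:
  assumes "g \<le> N0" "Z \<omega> = real g"
  shows "mixture \<omega> = exit_level g (\<lambda>i\<in>{g..N0}. coord i \<omega>)"
proof -
  have "mixture \<omega> = (\<Sum>k\<le>N0. if k = g then sqrt (2 * (\<Sum>j\<in>{k..N0}. lam n N0 N1 v j * E' j \<omega>)) else 0)"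
    unfolding mixture_def using assms(2) by (intro sum.cong) auto
  also have "\<dots> = exit_level g (\<lambda>i. E' i \<omega>)"
    using assms(1) by (simp add: exit_level_def)
  also have "\<dots> = exit_level g (\<lambda>i\<in>{g..N0}. coord i \<omega>)"
    unfolding exit_level_restrict by (simp add: exit_level_def coord_def)
  finally show ?thesis .
qed

lemma prob_Z_exit_level:
  assumes g: "g \<le> N0" and A: "A \<in> sets borel"
  shows "PN.prob {\<omega> \<in> space N. Z \<omega> = real g \<and> exit_level g (\<lambda>i\<in>{g..N0}. coord i \<omega>) \<in> A}
       = PN.prob {\<omega> \<in> space N. Z \<omega> = real g} * exit_level_prob g A"
proof -
  define S where "S = {z \<in> space (\<Pi>\<^sub>M i\<in>{Suc N0}. borel). z (Suc N0) = real g}"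
  have "(\<lambda>z. z (Suc N0)) \<in> borel_measurable (\<Pi>\<^sub>M i\<in>{Suc N0}. borel :: real measure)"
    by (rule measurable_component_singleton) simp
  then have S: "S \<in> sets (\<Pi>\<^sub>M i\<in>{Suc N0}. borel)"
    unfolding S_def by measurable
  have indep: "PN.indep_var (\<Pi>\<^sub>M i\<in>{Suc N0}. borel) (\<lambda>\<omega>. \<lambda>i\<in>{Suc N0}. coord i \<omega>)
      (\<Pi>\<^sub>M i\<in>{g..N0}. borel) (\<lambda>\<omega>. \<lambda>i\<in>{g..N0}. coord i \<omega>)"
    unfolding coord_def[abs_def] by (rule PN.indep_var_restrict[OF EZ_indep]) auto
  have "distr N (\<Pi>\<^sub>M i\<in>{g..N0}. borel) (\<lambda>\<omega>. \<lambda>i\<in>{g..N0}. coord i \<omega>) = (\<Pi>\<^sub>M i\<in>{g..N0}. exp_law)"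
  proof (rule PN.distr_restrict_indep_vars)
    show "PN.indep_vars (\<lambda>_. borel) coord {g..N0}"
      unfolding coord_def[abs_def] by (rule PN.indep_vars_subset[OF EZ_indep]) auto
  qed (use g in \<open>auto simp: coord_def distr_borel_exponential[OF E'_exp]\<close>)
  from PN.prob_indep_var_vimage[OF indep S this borel_measurable_exit_level A]
  show ?thesis by (simp add: S_def exit_level_prob_def space_PiM coord_def cong: conj_cong)
qed

lemma prob_Z_eq:
  "g \<le> N0 \<Longrightarrow> PN.prob {\<omega> \<in> space N. Z \<omega> = real g} = PM.prob {\<omega> \<in> space M. n_desc (sample \<omega>) = N0 - g}"
  using Z_law prob_rev_pos by simp

lemma AE_Z_range: "AE \<omega> in N. \<omega> \<in> (\<Union>g\<in>{..N0}. {\<omega> \<in> space N. Z \<omega> = real g})"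
proof (rule PN.AE_prob_1)
  have "PN.prob (\<Union>g\<in>{..N0}. {\<omega> \<in> space N. Z \<omega> = real g})
      = (\<Sum>g\<le>N0. PN.prob {\<omega> \<in> space N. Z \<omega> = real g})"
    by (rule PN.finite_measure_finite_Union) (auto simp: disjoint_family_on_def)
  also have "\<dots> = (\<Sum>g\<le>N0. PM.prob {\<omega> \<in> space M. n_desc (sample \<omega>) = N0 - g})"
    by (simp add: prob_Z_eq)
  also have "\<dots> = 1"
    using sum_atMost_reflect[of "\<lambda>d. PM.prob {\<omega> \<in> space M. n_desc (sample \<omega>) = d}"] sum_prob_n_desc
    by simp
  finally show "PN.prob (\<Union>g\<in>{..N0}. {\<omega> \<in> space N. Z \<omega> = real g}) = 1" .
qed

lemma prob_mixture:
  assumes A: "A \<in> sets borel"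
  shows "PN.prob {\<omega> \<in> space N. mixture \<omega> \<in> A}
     = (\<Sum>g\<le>N0. PN.prob {\<omega> \<in> space N. Z \<omega> = real g} * exit_level_prob g A)"
proof -
  define B where "B g = {\<omega> \<in> space N. Z \<omega> = real g \<and> exit_level g (\<lambda>i\<in>{g..N0}. coord i \<omega>) \<in> A}" for g
  have B: "B g \<in> sets N" if "g \<le> N0" for g
  proof -
    have "(\<lambda>\<omega>. \<lambda>i\<in>{g..N0}. coord i \<omega>) \<in> measurable N (\<Pi>\<^sub>M i\<in>{g..N0}. borel)"
      by (rule measurable_restrict) (use borel_measurable_coord that in auto)
    from measurable_compose[OF this borel_measurable_exit_level]
    have "(\<lambda>\<omega>. exit_level g (\<lambda>i\<in>{g..N0}. coord i \<omega>)) \<in> borel_measurable N" .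
    then show ?thesis unfolding B_def using A by measurable
  qed
  have mixture_set: "{\<omega> \<in> space N. mixture \<omega> \<in> A} \<in> sets N"
    using measurable_sets[OF borel_measurable_mixture A] by (simp add: vimage_def Int_def conj_commute)
  have "PN.prob {\<omega> \<in> space N. mixture \<omega> \<in> A} = PN.prob (\<Union>g\<in>{..N0}. B g)"
  proof (rule PN.finite_measure_eq_AE)
    show "AE \<omega> in N. (\<omega> \<in> {\<omega> \<in> space N. mixture \<omega> \<in> A}) = (\<omega> \<in> (\<Union>g\<in>{..N0}. B g))"
      using AE_Z_range
    proof eventually_elim
      case (elim \<omega>)
      then obtain g where "g \<le> N0" "Z \<omega> = real g" "\<omega> \<in> space N" by auto
      then show ?case using mixture_eq by (auto simp: B_def)
    qed
  qed (use B mixture_set in auto)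
  also have "\<dots> = (\<Sum>g\<le>N0. PN.prob (B g))"
    by (rule PN.finite_measure_finite_Union) (use B in \<open>auto simp: disjoint_family_on_def B_def\<close>)
  also have "\<dots> = (\<Sum>g\<le>N0. PN.prob {\<omega> \<in> space N. Z \<omega> = real g} * exit_level_prob g A)"
    unfolding B_def by (intro sum.cong refl prob_Z_exit_level A) simp
  finally show ?thesis .
qed

theorem distr_exit_mem_eq_mixture: "distr M borel exit_mem = distr N borel mixture"
proof (rule measure_eqI)
  fix A assume "A \<in> sets (distr M borel exit_mem)"
  then have A: "A \<in> sets borel" by simp
  have "PN.prob {\<omega> \<in> space N. mixture \<omega> \<in> A}
      = (\<Sum>g\<le>N0. PM.prob {\<omega> \<in> space M. n_desc (sample \<omega>) = N0 - g} * exit_level_prob g A)"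
    unfolding prob_mixture[OF A] by (simp add: prob_Z_eq)
  also have "\<dots> = (\<Sum>d\<le>N0. PM.prob {\<omega> \<in> space M. n_desc (sample \<omega>) = N0 - (N0 - d)}
      * exit_level_prob (N0 - d) A)"
    by (rule sum_atMost_reflect[symmetric])
  also have "\<dots> = PM.prob {\<omega> \<in> space M. exit_mem \<omega> \<in> A}"
    unfolding prob_exit_mem[OF A] by (intro sum.cong) auto
  finally show "emeasure (distr M borel exit_mem) A = emeasure (distr N borel mixture) A"
    using A borel_measurable_mixture borel_measurable_path_exitT[where E=sample and M=M, OF borel_measurable_E]
    by (simp add: emeasure_distr PM.emeasure_eq_measure PN.emeasure_eq_measure vimage_def Int_def conj_commute)
qed simp

end

theorem mainTheorem6:
  fixes N0 N1 :: "nat \<Rightarrow> nat" and v :: "nat \<Rightarrow> nat \<Rightarrow> real"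
    and M :: "'a measure" and E :: "nat \<Rightarrow> nat \<Rightarrow> 'a \<Rightarrow> real"
    and n :: nat and l :: real
    and N :: "'b measure" and E' :: "nat \<Rightarrow> 'b \<Rightarrow> real" and Z :: "'b \<Rightarrow> real"
  assumes N0_small: "\<And>m. 2 \<le> m \<Longrightarrow> 2 * N0 m < m"
    and N1_small: "\<And>m. 2 \<le> m \<Longrightarrow> 2 * N1 m < m"
    and N0_lim: "(\<lambda>m. real (N0 m) / real m) \<longlonglongrightarrow> 0"
    and N1_lim: "(\<lambda>m. real (N1 m) / real m) \<longlonglongrightarrow> 0"
    and v_pos: "\<And>m j. 2 \<le> m \<Longrightarrow> j \<le> N0 m \<Longrightarrow> 0 < v m j"
    and v_neg: "\<And>m j. 2 \<le> m \<Longrightarrow> m - N1 m \<le> j \<Longrightarrow> j \<le> m \<Longrightarrow> v m j < 0"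
    and v_zero: "\<And>m j. 2 \<le> m \<Longrightarrow> N0 m < j \<Longrightarrow> j < m - N1 m \<Longrightarrow> v m j = 0"
    and v_sum0: "\<And>m. 2 \<le> m \<Longrightarrow> (\<Sum>j\<le>N0 m. v m j) = real m"
    and v_sum1: "\<And>m. 2 \<le> m \<Longrightarrow> (\<Sum>j\<le>N1 m. \<bar>v m (m - j)\<bar>) = real m"
    and F': "\<And>m j. 2 \<le> m \<Longrightarrow> j < N0 m \<Longrightarrow> v m (Suc j) \<le> v m j \<and> 0 < v m (Suc j)"
    and M_prob: "prob_space M"
    and E_indep: "prob_space.indep_vars M (\<lambda>_. borel) (\<lambda>(k, j). E k j) UNIV"
    and E_exp: "\<And>k j. distributed M lborel (E k j) (exponential_density 1)"
    and n2: "2 \<le> n" and l_neg: "l < 0"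
    and N_prob: "prob_space N"
    and E'_exp: "\<And>k. k \<le> N0 n \<Longrightarrow> distributed N lborel (E' k) (exponential_density 1)"
    and EZ_indep: "prob_space.indep_vars N (\<lambda>_. borel)
                    (\<lambda>i. if i = Suc (N0 n) then Z else E' i) {..Suc (N0 n)}"
    and Z_law: "\<And>j. j \<le> N0 n \<Longrightarrow>
        measure N {\<omega> \<in> space N. Z \<omega> = real j} =
        measure M {\<omega> \<in> space M.
          fst (path n (nl_rate n (N0 n) (N1 n) (v n)) (v n) (N0 n) l (\<lambda>k j. E k j \<omega>)
                 (revT n (nl_rate n (N0 n) (N1 n) (v n)) (v n) (N0 n) l (\<lambda>k j. E k j \<omega>))) = j}"
  shows "(\<lambda>\<omega>. snd (path n (nl_rate n (N0 n) (N1 n) (v n)) (v n) (N0 n) l (\<lambda>k j. E k j \<omega>)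
              (exitT n (nl_rate n (N0 n) (N1 n) (v n)) (v n) (N0 n) l {..N0 n} (\<lambda>k j. E k j \<omega>))))
           \<in> borel_measurable M
       \<and> distr M borel (\<lambda>\<omega>. snd (path n (nl_rate n (N0 n) (N1 n) (v n)) (v n) (N0 n) l (\<lambda>k j. E k j \<omega>)
              (exitT n (nl_rate n (N0 n) (N1 n) (v n)) (v n) (N0 n) l {..N0 n} (\<lambda>k j. E k j \<omega>))))
         = distr N borel (\<lambda>\<omega>. \<Sum>k\<le>N0 n.
              sqrt (2 * (\<Sum>j\<in>{k..N0 n}. lam n (N0 n) (N1 n) (v n) j * E' j \<omega>))
              * (if Z \<omega> = real k then 1 else 0))"
proof -
  have "N0 n < n" using N0_small[OF n2] by simp
  then interpret noiseless_coupling n "N0 n" "N1 n" "v n" l M E N E' Z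
    using v_pos[OF n2] l_neg M_prob E_indep E_exp N_prob E'_exp EZ_indep Z_law
    by (simp add: noiseless_coupling_def noiseless_coupling_axioms_def noiseless_prob_def
        noiseless_prob_axioms_def noiseless_def)
  show ?thesis
    using borel_measurable_path_exitT[where E=sample and M=M, OF borel_measurable_E]
      distr_exit_mem_eq_mixture
    by (simp add: mixture_def[abs_def])
qed

end
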